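(* Let $G$ be a finite connected undirected graph with vertices $v_1,\dots,v_n$ whose adjacency matrix $A(G)$ has Perron–Frobenius eigenvalue $\lambda_1>0$, with unit Perron–Frobenius eigenvector $X=(x_1,\dots,x_n)$ (all $x_m>0$), and let $\lambda=|\lambda_2|/\lambda_1<1$ where $\lambda_2$ is the eigenvalue of second largest modulus. Let $\Gamma$ be a group, $\gamma:V(G)\to\Gamma$, $t_m=\gamma(v_m)$, assume $\{t_a^{-1}t_b\}$ generates $\Gamma$, and let $\kappa>0$ be such that for every nontrivial irreducible finite-dimensional unitary representation $\rho$ of $\Gamma$ with finite image and every unit vector $u$ there is $s\in\{t_a^{-1}t_b\}$ with $\|\rho(s)u-u\|>\kappa$. Set $d=1-(\min_m x_m^2)\kappa^2/8$. Then for every such $\rho$, of dimension $k$, with $U=\mathrm{diag}(\rho(t_1),\dots,\rho(t_n))$ and $A=\lambda_1^{-1}A(G)\otimes I_k$, we have $\|(UA)^k\|_{op}\le g(\lambda,d)^{\lfloor k/2\rfloor}$ for all $k\ge 0$, where $g(\lambda,d)<1$ is a number depending only on $\lambda$ and $d$ (as in the preceding shrinkage theorem: for Hermitian $A$ with eigenvalue $1$, all other eigenvalues of modulus $\le\lambda$, and unitary $U$ with $\|P_{\max}Uv\|\le d\|v\|$ on the $1$-eigenspace, $\|(UA)^2\|_{op}\le g(\lambda,d)$).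
   Context: $\|\cdot\|_{op}$ is the operator norm; $P_{\max}$ is the orthogonal projection onto the eigenspace of $A$ for the eigenvalue $1$. *)

theory Defs
  imports "Jordan_Normal_Form.Spectral_Radius" "Jordan_Normal_Form.Schur_Decomposition"
          "HOL-Algebra.Generated_Groups"
begin

definition simple_graph :: "nat \<Rightarrow> (nat \<Rightarrow> nat \<Rightarrow> bool) \<Rightarrow> bool" where
  "simple_graph n E \<longleftrightarrow> (\<forall>a<n. \<forall>b<n. E a b = E b a) \<and> (\<forall>a<n. \<not> E a a)"

definition graph_connected :: "nat \<Rightarrow> (nat \<Rightarrow> nat \<Rightarrow> bool) \<Rightarrow> bool" where
  "graph_connected n E \<longleftrightarrow> 0 < n \<and>
     (\<forall>a<n. \<forall>b<n. (a, b) \<in> {(x, y). x < n \<and> y < n \<and> E x y}\<^sup>*)"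

definition adj_mat :: "nat \<Rightarrow> (nat \<Rightarrow> nat \<Rightarrow> bool) \<Rightarrow> real mat" where
  "adj_mat n E = mat n n (\<lambda>(a, b). if E a b then 1 else 0)"

definition cinner :: "complex vec \<Rightarrow> complex vec \<Rightarrow> complex" where
  "cinner x y = (\<Sum>i<dim_vec x. x $ i * cnj (y $ i))"

definition vnorm :: "complex vec \<Rightarrow> real" where
  "vnorm x = sqrt (\<Sum>i<dim_vec x. (cmod (x $ i))\<^sup>2)"

definition proj :: "complex vec set \<Rightarrow> complex vec \<Rightarrow> complex vec" where
  "proj W x = (THE w. w \<in> W \<and> (\<forall>z\<in>W. cinner (x - w) z = 0))"

definition opnorm :: "complex mat \<Rightarrow> real" where
  "opnorm M = Sup {vnorm (M *\<^sub>v v) | v. v \<in> carrier_vec (dim_col M) \<and> vnorm v \<le> 1}"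

definition unitary_mat :: "nat \<Rightarrow> complex mat \<Rightarrow> bool" where
  "unitary_mat k M \<longleftrightarrow> M \<in> carrier_mat k k \<and> mat_adjoint M * M = 1\<^sub>m k"

definition hermitian_mat :: "nat \<Rightarrow> complex mat \<Rightarrow> bool" where
  "hermitian_mat k M \<longleftrightarrow> M \<in> carrier_mat k k \<and> mat_adjoint M = M"

(* Kronecker product, index (a,r) \<mapsto> a * dim_row B + r *)
definition kron :: "complex mat \<Rightarrow> complex mat \<Rightarrow> complex mat" where
  "kron A B = mat (dim_row A * dim_row B) (dim_col A * dim_col B)
     (\<lambda>(i, j). A $$ (i div dim_row B, j div dim_col B) * B $$ (i mod dim_row B, j mod dim_col B))"

definition unitary_rep :: "('g, 'b) monoid_scheme \<Rightarrow> nat \<Rightarrow> ('g \<Rightarrow> complex mat) \<Rightarrow> bool" where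
  "unitary_rep G k \<rho> \<longleftrightarrow>
     (\<forall>g\<in>carrier G. unitary_mat k (\<rho> g)) \<and>
     (\<forall>g\<in>carrier G. \<forall>h\<in>carrier G. \<rho> (g \<otimes>\<^bsub>G\<^esub> h) = \<rho> g * \<rho> h)"

definition subspace_of :: "nat \<Rightarrow> complex vec set \<Rightarrow> bool" where
  "subspace_of k W \<longleftrightarrow> W \<subseteq> carrier_vec k \<and> 0\<^sub>v k \<in> W \<and>
     (\<forall>x\<in>W. \<forall>y\<in>W. x + y \<in> W) \<and> (\<forall>c. \<forall>x\<in>W. c \<cdot>\<^sub>v x \<in> W)"

definition irreducible_rep :: "('g, 'b) monoid_scheme \<Rightarrow> nat \<Rightarrow> ('g \<Rightarrow> complex mat) \<Rightarrow> bool" where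
  "irreducible_rep G k \<rho> \<longleftrightarrow> unitary_rep G k \<rho> \<and> 0 < k \<and>
     (\<forall>W. subspace_of k W \<and> (\<forall>g\<in>carrier G. \<forall>w\<in>W. \<rho> g *\<^sub>v w \<in> W)
          \<longrightarrow> W = {0\<^sub>v k} \<or> W = carrier_vec k)"

definition nontrivial_rep :: "('g, 'b) monoid_scheme \<Rightarrow> nat \<Rightarrow> ('g \<Rightarrow> complex mat) \<Rightarrow> bool" where
  "nontrivial_rep G k \<rho> \<longleftrightarrow> (\<exists>g\<in>carrier G. \<rho> g \<noteq> 1\<^sub>m k)"

(* The preceding shrinkage theorem, as a property of the constant g(\<lambda>,d):
   Hermitian A with eigenvalue 1 and all other eigenvalues of modulus \<le> \<lambda>, unitary U with
   ||P_max U v|| \<le> d ||v|| for v in the 1-eigenspace  \<Longrightarrow>  ||(UA)^2||_op \<le> g \<lambda> d *)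
definition shrinkage_const :: "(real \<Rightarrow> real \<Rightarrow> real) \<Rightarrow> bool" where
  "shrinkage_const g \<longleftrightarrow>
    (\<forall>l d N A U. 0 \<le> l \<and> l < 1 \<and> 0 \<le> d \<and> d < 1 \<and>
       hermitian_mat N A \<and> eigenvalue A 1 \<and>
       (\<forall>\<mu>\<in>spectrum A. \<mu> \<noteq> 1 \<longrightarrow> cmod \<mu> \<le> l) \<and>
       unitary_mat N U \<and>
       (\<forall>v\<in>{v \<in> carrier_vec N. A *\<^sub>v v = v}.
          vnorm (proj {v \<in> carrier_vec N. A *\<^sub>v v = v} (U *\<^sub>v v)) \<le> d * vnorm v)
     \<longrightarrow> opnorm ((U * A) ^\<^sub>m 2) \<le> g l d)"

end

(*
  The Hermitian matrix A = (1 / lambda_1) A(G) (x) I_k has eigenvalue 1, its eigenspace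
  consists of the vectors X (x) w because a positive eigenvector of a connected graph spans its
  eigenspace, and its other eigenvalues have modulus at most lambda. For v = X (x) w the projection
  of U v onto that eigenspace is X (x) c with c = sum_m x_m^2 rho(t_m) w, a convex combination of
  vectors of length |w|; as two of them are more than kappa |w| apart, the variance identity gives
  |c| <= d |w|. The shrinkage theorem, proved here via the spectral theorem for
  g(lambda, d) = sqrt (1 - (1 - lambda^2) (1 - d)^2 / 4), then gives |(U A)^2| <= g(lambda, d),
  and |U A| <= 1 handles the odd powers.
*)

theory Submission
  imports Defs
begin

lemma vnorm_nonneg [simp]: "0 \<le> vnorm x"
  unfolding vnorm_def by (simp add: sum_nonneg)

lemma vnorm_power2: "(vnorm x)\<^sup>2 = (\<Sum>i<dim_vec x. (cmod (x $ i))\<^sup>2)"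
  unfolding vnorm_def by (simp add: sum_nonneg)

lemma vnorm_zero [simp]: "vnorm (0\<^sub>v n) = 0"
  unfolding vnorm_def by simp

lemma vnorm_eq_0_iff:
  assumes "x \<in> carrier_vec n"
  shows "vnorm x = 0 \<longleftrightarrow> x = 0\<^sub>v n"
proof
  assume "vnorm x = 0"
  then have "(\<Sum>i<n. (cmod (x $ i))\<^sup>2) = 0"
    using vnorm_power2[of x] assms by simp
  then have "\<forall>i\<in>{..<n}. (cmod (x $ i))\<^sup>2 = 0"
    by (subst (asm) sum_nonneg_eq_0_iff) auto
  then show "x = 0\<^sub>v n"
    using assms by (intro eq_vecI) auto
qed simp

lemma vnorm_pos_iff:
  assumes "x \<in> carrier_vec n"
  shows "0 < vnorm x \<longleftrightarrow> x \<noteq> 0\<^sub>v n"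
  using vnorm_eq_0_iff[OF assms] vnorm_nonneg[of x] by linarith

lemma vnorm_smult: "vnorm (c \<cdot>\<^sub>v x) = cmod c * vnorm x"
  unfolding vnorm_def
  by (simp add: norm_mult power_mult_distrib sum_distrib_left[symmetric] real_sqrt_mult)

lemma vnorm_normalize:
  assumes "x \<in> carrier_vec n" "x \<noteq> 0\<^sub>v n"
  shows "vnorm (complex_of_real (1 / vnorm x) \<cdot>\<^sub>v x) = 1"
  using vnorm_pos_iff[OF assms(1)] assms(2) by (simp add: vnorm_smult norm_divide)

lemma cinner_self: "cinner x x = complex_of_real ((vnorm x)\<^sup>2)"
  unfolding vnorm_power2 cinner_def of_real_sum
  by (intro sum.cong refl) (rule complex_norm_square[symmetric])

lemma cinner_eq_cscalar_prod: "dim_vec x = dim_vec y \<Longrightarrow> cinner x y = x \<bullet>c y"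
  by (simp add: cinner_def scalar_prod_def atLeast0LessThan)

lemma cinner_add_left:
  "x \<in> carrier_vec n \<Longrightarrow> y \<in> carrier_vec n \<Longrightarrow> cinner (x + y) z = cinner x z + cinner y z"
  unfolding cinner_def by (simp add: algebra_simps sum.distrib)

lemma cinner_add_right:
  "x \<in> carrier_vec n \<Longrightarrow> y \<in> carrier_vec n \<Longrightarrow> z \<in> carrier_vec n \<Longrightarrow>
   cinner z (x + y) = cinner z x + cinner z y"
  unfolding cinner_def by (simp add: algebra_simps sum.distrib)

lemma cinner_diff_left:
  "x \<in> carrier_vec n \<Longrightarrow> y \<in> carrier_vec n \<Longrightarrow> cinner (x - y) z = cinner x z - cinner y z"
  unfolding cinner_def by (simp add: algebra_simps sum_subtractf)

lemma cinner_smult_left: "cinner (c \<cdot>\<^sub>v x) z = c * cinner x z"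
  unfolding cinner_def by (simp add: algebra_simps sum_distrib_left)

lemma cinner_smult_right:
  "x \<in> carrier_vec n \<Longrightarrow> z \<in> carrier_vec n \<Longrightarrow> cinner z (c \<cdot>\<^sub>v x) = cnj c * cinner z x"
  unfolding cinner_def by (simp add: algebra_simps sum_distrib_left)

lemma cinner_commute:
  "x \<in> carrier_vec n \<Longrightarrow> y \<in> carrier_vec n \<Longrightarrow> cinner y x = cnj (cinner x y)"
  unfolding cinner_def by (simp add: algebra_simps)

lemma cinner_zero_right: "x \<in> carrier_vec n \<Longrightarrow> cinner x (0\<^sub>v n) = 0"
  unfolding cinner_def by simp

lemma vnorm_add_power2:
  assumes x: "x \<in> carrier_vec n" and y: "y \<in> carrier_vec n"
  shows "(vnorm (x + y))\<^sup>2 = (vnorm x)\<^sup>2 + (vnorm y)\<^sup>2 + 2 * Re (cinner x y)"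
proof -
  have "complex_of_real ((vnorm (x + y))\<^sup>2) = cinner (x + y) (x + y)"
    by (simp add: cinner_self)
  also have "\<dots> = cinner x x + cinner x y + cnj (cinner x y) + cinner y y"
    using x y by (simp add: cinner_add_left cinner_add_right cinner_commute[OF x y])
  finally have "(vnorm (x + y))\<^sup>2 = Re (cinner x x + cinner x y + cnj (cinner x y) + cinner y y)"
    by (metis Re_complex_of_real)
  then show ?thesis
    by (simp add: cinner_self)
qed

lemma vnorm_diff_power2:
  assumes x: "x \<in> carrier_vec n" and y: "y \<in> carrier_vec n"
  shows "(vnorm (x - y))\<^sup>2 = (vnorm x)\<^sup>2 + (vnorm y)\<^sup>2 - 2 * Re (cinner x y)"
proof -
  have "x - y = x + (-1) \<cdot>\<^sub>v y"
    using x y by auto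
  then show ?thesis
    using vnorm_add_power2[OF x, of "(-1) \<cdot>\<^sub>v y"] y by (simp add: vnorm_smult cinner_smult_right[OF y x])
qed

lemma vnorm_add_power2_orthogonal:
  "x \<in> carrier_vec n \<Longrightarrow> y \<in> carrier_vec n \<Longrightarrow> cinner x y = 0 \<Longrightarrow>
   (vnorm (x + y))\<^sup>2 = (vnorm x)\<^sup>2 + (vnorm y)\<^sup>2"
  using vnorm_add_power2 by simp

lemma cinner_Cauchy_Schwarz:
  assumes x: "x \<in> carrier_vec n" and y: "y \<in> carrier_vec n"
  shows "cmod (cinner x y) \<le> vnorm x * vnorm y"
proof (cases "y = 0\<^sub>v n")
  case True
  then show ?thesis using x by (simp add: cinner_zero_right)
next
  case False
  then have yp: "0 < vnorm y" using vnorm_pos_iff[OF y] by simp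
  define c where "c = cinner x y / complex_of_real ((vnorm y)\<^sup>2)"
  have "cnj c * cinner x y = (cinner x y * cnj (cinner x y)) / complex_of_real ((vnorm y)\<^sup>2)"
    unfolding c_def by (simp add: mult.commute)
  also have "\<dots> = complex_of_real ((cmod (cinner x y))\<^sup>2 / (vnorm y)\<^sup>2)"
    by (subst complex_norm_square[symmetric]) simp
  finally have "cnj c * cinner x y = complex_of_real ((cmod (cinner x y))\<^sup>2 / (vnorm y)\<^sup>2)" .
  moreover have "cmod c = cmod (cinner x y) / (vnorm y)\<^sup>2"
    unfolding c_def by (simp add: norm_divide norm_power)
  then have "(cmod c * vnorm y)\<^sup>2 = (cmod (cinner x y))\<^sup>2 / (vnorm y)\<^sup>2"
    using yp by (simp add: power2_eq_square field_simps)
  moreover have "0 \<le> (vnorm (x - c \<cdot>\<^sub>v y))\<^sup>2" by simp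
  ultimately have "0 \<le> (vnorm x)\<^sup>2 - (cmod (cinner x y))\<^sup>2 / (vnorm y)\<^sup>2"
    using x y by (simp add: vnorm_diff_power2 vnorm_smult cinner_smult_right[OF y x])
  then have "(cmod (cinner x y))\<^sup>2 \<le> (vnorm x * vnorm y)\<^sup>2"
    using yp by (simp add: field_simps power_mult_distrib)
  then show ?thesis by (rule power2_le_imp_le) simp
qed

lemma vnorm_triangle:
  assumes x: "x \<in> carrier_vec n" and y: "y \<in> carrier_vec n"
  shows "vnorm (x + y) \<le> vnorm x + vnorm y"
proof -
  have "Re (cinner x y) \<le> vnorm x * vnorm y"
    using cinner_Cauchy_Schwarz[OF x y] complex_Re_le_cmod[of "cinner x y"] by linarith
  then have "(vnorm (x + y))\<^sup>2 \<le> (vnorm x + vnorm y)\<^sup>2"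
    using vnorm_add_power2[OF x y] by (simp add: power2_eq_square algebra_simps)
  then show ?thesis by (rule power2_le_imp_le) simp
qed

lemma vnorm_diff_triangle:
  assumes x: "x \<in> carrier_vec n" and y: "y \<in> carrier_vec n" and z: "z \<in> carrier_vec n"
  shows "vnorm (x - z) \<le> vnorm (x - y) + vnorm (y - z)"
proof -
  have "x - z = (x - y) + (y - z)"
    using x y z by (intro eq_vecI) auto
  then show ?thesis
    using vnorm_triangle[of "x - y" n "y - z"] x y z by simp
qed

lemma vnorm_diff_commute:
  assumes "x \<in> carrier_vec n" "y \<in> carrier_vec n"
  shows "vnorm (x - y) = vnorm (y - x)"
proof -
  have "y - x = (-1) \<cdot>\<^sub>v (x - y)"
    using assms by (intro eq_vecI) auto
  then show ?thesis
    by (simp add: vnorm_smult)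
qed

lemma mat_adjoint_dim [simp]:
  "dim_row (mat_adjoint M) = dim_col M" "dim_col (mat_adjoint M) = dim_row M"
  for M :: "complex mat"
  by (auto simp: mat_adjoint_def)

lemma mat_adjoint_carrier [simp]: "M \<in> carrier_mat n m \<Longrightarrow> mat_adjoint M \<in> carrier_mat m n"
  for M :: "complex mat"
  by (intro carrier_matI) auto

lemma mat_adjoint_index [simp]:
  "i < dim_col M \<Longrightarrow> j < dim_row M \<Longrightarrow> mat_adjoint M $$ (i, j) = cnj (M $$ (j, i))"
  for M :: "complex mat"
  by (simp add: mat_adjoint_def mat_of_rows_def)

lemma mat_adjoint_adjoint [simp]: "mat_adjoint (mat_adjoint M) = M"
  for M :: "complex mat"
  by (rule eq_matI) auto

lemma mat_adjoint_mult:
  fixes A B :: "complex mat"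
  assumes A: "A \<in> carrier_mat n m" and B: "B \<in> carrier_mat m p"
  shows "mat_adjoint (A * B) = mat_adjoint B * mat_adjoint A"
proof (rule eq_matI)
  fix i j
  assume "i < dim_row (mat_adjoint B * mat_adjoint A)" "j < dim_col (mat_adjoint B * mat_adjoint A)"
  then show "mat_adjoint (A * B) $$ (i, j) = (mat_adjoint B * mat_adjoint A) $$ (i, j)"
    using A B by (simp add: scalar_prod_def mult.commute)
qed (use A B in auto)

lemma mat_adjoint_mult_index:
  assumes "X \<in> carrier_mat N p" "Y \<in> carrier_mat N q" "i < p" "j < q"
  shows "(mat_adjoint X * Y) $$ (i, j) = cinner (col Y j) (col X i)"
  using assms by (simp add: scalar_prod_def cinner_def atLeast0LessThan mult.commute)

lemma cinner_mult_mat_vec_left: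
  assumes M: "M \<in> carrier_mat n m" and x: "x \<in> carrier_vec m" and y: "y \<in> carrier_vec n"
  shows "cinner (M *\<^sub>v x) y = cinner x (mat_adjoint M *\<^sub>v y)"
proof -
  have "cinner (M *\<^sub>v x) y = (\<Sum>i<n. \<Sum>j<m. M $$ (i, j) * x $ j * cnj (y $ i))"
    using M x y by (simp add: cinner_def scalar_prod_def atLeast0LessThan sum_distrib_right)
  also have "\<dots> = (\<Sum>j<m. \<Sum>i<n. M $$ (i, j) * x $ j * cnj (y $ i))"
    by (rule sum.swap)
  also have "\<dots> = cinner x (mat_adjoint M *\<^sub>v y)"
    using M x y by (simp add: cinner_def scalar_prod_def atLeast0LessThan sum_distrib_left mult_ac)
  finally show ?thesis .
qed

lemma unitary_mat_carrier: "unitary_mat n U \<Longrightarrow> U \<in> carrier_mat n n"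
  by (simp add: unitary_mat_def)

lemma unitary_mat_right_inverse: "unitary_mat n U \<Longrightarrow> U * mat_adjoint U = 1\<^sub>m n"
  unfolding unitary_mat_def by (intro mat_mult_left_right_inverse[of "mat_adjoint U" n]) auto

lemma unitary_mat_adjoint: "unitary_mat n U \<Longrightarrow> unitary_mat n (mat_adjoint U)"
  using unitary_mat_right_inverse unfolding unitary_mat_def by auto

lemma unitary_mat_mult:
  assumes P: "unitary_mat n P" and Q: "unitary_mat n Q"
  shows "unitary_mat n (P * Q)"
proof -
  have Pc: "P \<in> carrier_mat n n" and Qc: "Q \<in> carrier_mat n n"
    using P Q unitary_mat_carrier by auto
  have "mat_adjoint (P * Q) * (P * Q) = mat_adjoint Q * ((mat_adjoint P * P) * Q)"
    using Pc Qc by (simp add: mat_adjoint_mult assoc_mult_mat[of _ n n _ n _ n])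
  also have "\<dots> = 1\<^sub>m n"
    using P Q Qc by (simp add: unitary_mat_def)
  finally show ?thesis
    using Pc Qc by (simp add: unitary_mat_def)
qed

lemma unitary_mat_orthonormal_cols:
  assumes V: "unitary_mat n V" and i: "i < n" and j: "j < n"
  shows "(\<Sum>r<n. cnj (V $$ (r, i)) * V $$ (r, j)) = (if i = j then 1 else 0)"
proof -
  have Vc: "V \<in> carrier_mat n n"
    using V by (simp add: unitary_mat_def)
  have "(mat_adjoint V * V) $$ (i, j) = 1\<^sub>m n $$ (i, j)"
    using V by (simp add: unitary_mat_def)
  moreover have "(mat_adjoint V * V) $$ (i, j) = (\<Sum>r<n. cnj (V $$ (r, i)) * V $$ (r, j))"
    using Vc i j by (simp add: scalar_prod_def atLeast0LessThan)
  ultimately show ?thesis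
    using i j by simp
qed

lemma unitary_matI_orthonormal_cols:
  assumes Vc: "V \<in> carrier_mat n n"
    and orth: "\<And>i j. i < n \<Longrightarrow> j < n \<Longrightarrow>
      (\<Sum>r<n. cnj (V $$ (r, i)) * V $$ (r, j)) = (if i = j then 1 else 0)"
  shows "unitary_mat n V"
  unfolding unitary_mat_def
proof (intro conjI Vc eq_matI)
  fix i j assume "i < dim_row (1\<^sub>m n :: complex mat)" "j < dim_col (1\<^sub>m n :: complex mat)"
  then have i: "i < n" and j: "j < n" by auto
  have "(mat_adjoint V * V) $$ (i, j) = (\<Sum>r<n. cnj (V $$ (r, i)) * V $$ (r, j))"
    using Vc i j by (simp add: scalar_prod_def atLeast0LessThan)
  then show "(mat_adjoint V * V) $$ (i, j) = 1\<^sub>m n $$ (i, j)"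
    using orth[OF i j] i j by simp
qed (use Vc in auto)

lemma unitary_cinner:
  assumes U: "unitary_mat n U" and x: "x \<in> carrier_vec n" and y: "y \<in> carrier_vec n"
  shows "cinner (U *\<^sub>v x) (U *\<^sub>v y) = cinner x y"
proof -
  have Uc: "U \<in> carrier_mat n n" using U unitary_mat_carrier by auto
  have "cinner (U *\<^sub>v x) (U *\<^sub>v y) = cinner x (mat_adjoint U *\<^sub>v (U *\<^sub>v y))"
    using Uc x y by (simp add: cinner_mult_mat_vec_left)
  also have "mat_adjoint U *\<^sub>v (U *\<^sub>v y) = (mat_adjoint U * U) *\<^sub>v y"
    using assoc_mult_mat_vec[OF mat_adjoint_carrier[OF Uc] Uc y] by simp
  finally show ?thesis
    using U y by (simp add: unitary_mat_def)
qed

lemma unitary_vnorm: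
  assumes U: "unitary_mat n U" and x: "x \<in> carrier_vec n"
  shows "vnorm (U *\<^sub>v x) = vnorm x"
proof -
  have "complex_of_real ((vnorm (U *\<^sub>v x))\<^sup>2) = complex_of_real ((vnorm x)\<^sup>2)"
    using unitary_cinner[OF U x x] by (simp only: cinner_self)
  then show ?thesis
    by (simp only: of_real_eq_iff power2_eq_iff_nonneg vnorm_nonneg)
qed

lemma hermitian_mat_carrier: "hermitian_mat n A \<Longrightarrow> A \<in> carrier_mat n n"
  by (simp add: hermitian_mat_def)

lemma hermitian_cinner:
  assumes A: "hermitian_mat n A" and x: "x \<in> carrier_vec n" and y: "y \<in> carrier_vec n"
  shows "cinner (A *\<^sub>v x) y = cinner x (A *\<^sub>v y)"
  using cinner_mult_mat_vec_left[of A n n x y] A x y unfolding hermitian_mat_def by auto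

lemma hermitian_matI:
  assumes A: "A \<in> carrier_mat n n"
    and entry: "\<And>i j. i < n \<Longrightarrow> j < n \<Longrightarrow> A $$ (i, j) = cnj (A $$ (j, i))"
  shows "hermitian_mat n A"
  unfolding hermitian_mat_def
proof (intro conjI A eq_matI)
  fix i j assume "i < dim_row A" "j < dim_col A"
  then show "mat_adjoint A $$ (i, j) = A $$ (i, j)"
    using A entry[of i j] by simp
qed (use A in auto)

lemma mult_mat_vec_zero: "M \<in> carrier_mat m n \<Longrightarrow> M *\<^sub>v 0\<^sub>v n = 0\<^sub>v m"
  by (intro eq_vecI) (auto simp: carrier_matD)

lemma unitary_mat_cinner_cols:
  assumes W: "unitary_mat n W" and i: "i < n" and j: "j < n"
  shows "cinner (col W j) (col W i) = (if i = j then 1 else 0)"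
proof -
  have Wc: "W \<in> carrier_mat n n"
    using W by (rule unitary_mat_carrier)
  have "cinner (col W j) (col W i) = (mat_adjoint W * W) $$ (i, j)"
    using mat_adjoint_mult_index[OF Wc Wc i j] by simp
  then show ?thesis
    using W i j by (simp add: unitary_mat_def)
qed

section \<open>The spectral theorem for Hermitian matrices\<close>

lemma unitary_mat_of_orthogonal_cols:
  assumes ws: "set ws \<subseteq> carrier_vec N" "corthogonal ws" "length ws = N"
  defines "W \<equiv> mat_of_cols N (map (\<lambda>w. complex_of_real (1 / vnorm w) \<cdot>\<^sub>v w) ws)"
  shows "unitary_mat N W"
proof (rule unitary_matI_orthonormal_cols)
  show "W \<in> carrier_mat N N"
    using mat_of_cols_carrier(1)[of N "map (\<lambda>w. complex_of_real (1 / vnorm w) \<cdot>\<^sub>v w) ws"] ws(3)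
    by (simp add: W_def)
next
  fix i j assume i: "i < N" and j: "j < N"
  have wsc: "ws ! i \<in> carrier_vec N" if "i < N" for i
    using ws that by auto
  have ws_pos: "0 < vnorm (ws ! i)" if "i < N" for i
  proof -
    have "ws ! i \<bullet>c ws ! i \<noteq> 0"
      using corthogonalD[OF ws(2), of i i] that ws(3) by auto
    then have "cinner (ws ! i) (ws ! i) \<noteq> 0"
      using cinner_eq_cscalar_prod[of "ws ! i" "ws ! i"] by simp
    then have "vnorm (ws ! i) \<noteq> 0"
      by (simp add: cinner_self)
    then show ?thesis
      using vnorm_nonneg[of "ws ! i"] by linarith
  qed
  have "(\<Sum>r<N. cnj (W $$ (r, i)) * W $$ (r, j)) =
    complex_of_real (1 / vnorm (ws ! j)) * complex_of_real (1 / vnorm (ws ! i)) * (ws ! j \<bullet>c ws ! i)"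
    using ws i j wsc[OF i] wsc[OF j]
    by (simp add: W_def mat_of_cols_def scalar_prod_def atLeast0LessThan sum_distrib_left mult_ac)
  also have "\<dots> = (if i = j then 1 else 0)"
  proof (cases "i = j")
    case True
    have "ws ! i \<bullet>c ws ! i = complex_of_real ((vnorm (ws ! i))\<^sup>2)"
      using cinner_eq_cscalar_prod[of "ws ! i" "ws ! i"] cinner_self[of "ws ! i"] by simp
    then show ?thesis
      using True ws_pos[OF i] by (simp add: power2_eq_square)
  next
    case False
    then show ?thesis
      using corthogonalD[OF ws(2), of j i] i j ws(3) by auto
  qed
  finally show "(\<Sum>r<N. cnj (W $$ (r, i)) * W $$ (r, j)) = (if i = j then 1 else 0)" .
qed

lemma unitary_mat_with_first_col:
  assumes v: "v \<in> carrier_vec N" and v1: "vnorm v = 1"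
  shows "\<exists>W. unitary_mat N W \<and> col W 0 = v"
proof -
  have v0: "v \<noteq> 0\<^sub>v N"
    using v1 by auto
  then have N: "0 < N"
    using v by (cases N) auto
  interpret cof_vec_space N "TYPE(complex)" .
  have b: "set (basis_completion v) \<subseteq> carrier_vec N" "distinct (basis_completion v)"
      "\<not> lin_dep (set (basis_completion v))" "length (basis_completion v) = N"
    and hd: "hd (basis_completion v) = v"
    using basis_completion[OF v v0] by auto
  obtain vs where bv: "basis_completion v = v # vs"
    using hd b(4) N by (cases "basis_completion v") auto
  define ws where "ws = gram_schmidt N (basis_completion v)"
  have ws: "set ws \<subseteq> carrier_vec N" "corthogonal ws" "length ws = N"
    using gram_schmidt_result[OF b(1-3) ws_def] b(4) by auto
  have "ws ! 0 = v"
    using gram_schmidt_hd[OF v, of vs] ws(3) N bv unfolding ws_def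
    by (cases "gram_schmidt N (v # vs)") auto
  then have "map (\<lambda>w. complex_of_real (1 / vnorm w) \<cdot>\<^sub>v w) ws ! 0 = v"
    using ws(3) N v v1 by simp
  then have "col (mat_of_cols N (map (\<lambda>w. complex_of_real (1 / vnorm w) \<cdot>\<^sub>v w) ws)) 0 = v"
    using ws(3) N v by (subst col_mat_of_cols) auto
  then show ?thesis
    using unitary_mat_of_orthogonal_cols[OF ws] by blast
qed

definition bordered :: "complex \<Rightarrow> complex mat \<Rightarrow> complex mat" where
  "bordered c B = mat (Suc (dim_row B)) (Suc (dim_col B))
     (\<lambda>(i, j). if i = 0 \<and> j = 0 then c else if i = 0 \<or> j = 0 then 0 else B $$ (i - 1, j - 1))"

lemma bordered_carrier [simp]: "B \<in> carrier_mat n m \<Longrightarrow> bordered c B \<in> carrier_mat (Suc n) (Suc m)"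
  by (simp add: bordered_def carrier_matD)

lemma bordered_index:
  "i < Suc (dim_row B) \<Longrightarrow> j < Suc (dim_col B) \<Longrightarrow> bordered c B $$ (i, j) =
     (if i = 0 \<and> j = 0 then c else if i = 0 \<or> j = 0 then 0 else B $$ (i - 1, j - 1))"
  by (simp add: bordered_def)

lemma bordered_mult:
  assumes B: "B \<in> carrier_mat n m" and C: "C \<in> carrier_mat m p"
  shows "bordered b B * bordered c C = bordered (b * c) (B * C)"
proof (rule eq_matI)
  fix i j assume "i < dim_row (bordered (b * c) (B * C))" "j < dim_col (bordered (b * c) (B * C))"
  then have i: "i < Suc n" and j: "j < Suc p"
    using B C by (auto simp: bordered_def)
  have "(bordered b B * bordered c C) $$ (i, j) = (\<Sum>r<Suc m. bordered b B $$ (i, r) * bordered c C $$ (r, j))"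
    using B C i j by (simp add: scalar_prod_def atLeast0LessThan bordered_def del: sum.lessThan_Suc)
  also have "\<dots> = bordered b B $$ (i, 0) * bordered c C $$ (0, j) +
      (\<Sum>r<m. bordered b B $$ (i, Suc r) * bordered c C $$ (Suc r, j))"
    by (rule sum.lessThan_Suc_shift)
  also have "\<dots> = bordered (b * c) (B * C) $$ (i, j)"
    using B C i j by (cases i; cases j) (auto simp: bordered_index scalar_prod_def atLeast0LessThan)
  finally show "(bordered b B * bordered c C) $$ (i, j) = bordered (b * c) (B * C) $$ (i, j)" .
qed (use B C in \<open>auto simp: bordered_def\<close>)

lemma mat_adjoint_bordered: "mat_adjoint (bordered c B) = bordered (cnj c) (mat_adjoint B)"
  by (rule eq_matI) (auto simp: bordered_def)

lemma bordered_one: "bordered 1 (1\<^sub>m n) = 1\<^sub>m (Suc n)"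
  by (rule eq_matI) (auto simp: bordered_def)

lemma mat_diag_Suc: "mat_diag (Suc n) (case_nat e \<mu>) = bordered e (mat_diag n \<mu>)"
  by (rule eq_matI) (auto simp: bordered_def mat_diag_def split: nat.split)

lemma unitary_mat_bordered:
  assumes "unitary_mat n V"
  shows "unitary_mat (Suc n) (bordered 1 V)"
  using assms unfolding unitary_mat_def
  by (simp add: mat_adjoint_bordered bordered_mult[of _ n n _ n] bordered_one)

lemma hermitian_unitary_conj_bordered:
  assumes A: "hermitian_mat (Suc n) A" and W: "unitary_mat (Suc n) W"
    and ev: "A *\<^sub>v col W 0 = e \<cdot>\<^sub>v col W 0"
  shows "\<exists>A3. hermitian_mat n A3 \<and> mat_adjoint W * (A * W) = bordered e A3"
proof -
  define N where "N = Suc n"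
  define A' where "A' = mat_adjoint W * (A * W)"
  have Ac: "A \<in> carrier_mat N N" and Wc: "W \<in> carrier_mat N N"
    using A W by (auto simp: N_def hermitian_mat_carrier unitary_mat_carrier)
  have A'c: "A' \<in> carrier_mat N N"
    unfolding A'_def using mult_carrier_mat[OF mat_adjoint_carrier[OF Wc] mult_carrier_mat[OF Ac Wc]] .
  have A'_index: "A' $$ (i, j) = cinner (A *\<^sub>v col W j) (col W i)" if i: "i < N" and j: "j < N" for i j
  proof -
    have "A' $$ (i, j) = cinner (col (A * W) j) (col W i)"
      unfolding A'_def using Ac Wc by (intro mat_adjoint_mult_index[OF Wc _ i j]) simp
    also have "col (A * W) j = A *\<^sub>v col W j"
      by (rule col_mult2[OF Ac Wc j])
    finally show ?thesis .
  qed
  have A'_herm: "A' $$ (i, j) = cnj (A' $$ (j, i))" if i: "i < N" and j: "j < N" for i j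
    using A'_index[OF i j] A'_index[OF j i] hermitian_cinner[OF A[folded N_def], of "col W j" "col W i"]
      cinner_commute[of "A *\<^sub>v col W i" N "col W j"] Ac Wc i j by simp
  have col0: "A' $$ (i, 0) = (if i = 0 then e else 0)" if i: "i < N" for i
    using A'_index[OF i] unitary_mat_cinner_cols[OF W[folded N_def] i, of 0] i
    by (simp add: N_def ev cinner_smult_left)
  define A3 where "A3 = mat n n (\<lambda>(i, j). A' $$ (Suc i, Suc j))"
  have "hermitian_mat n A3"
    by (rule hermitian_matI) (auto simp: A3_def N_def intro!: A'_herm)
  moreover have "A' = bordered e A3"
  proof (rule eq_matI)
    fix i j assume "i < dim_row (bordered e A3)" "j < dim_col (bordered e A3)"
    then have i: "i < N" and j: "j < N"
      by (auto simp: bordered_def A3_def N_def)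
    show "A' $$ (i, j) = bordered e A3 $$ (i, j)"
    proof (cases "i = 0 \<or> j = 0")
      case True
      then show ?thesis
        using col0[OF i] col0[OF j] A'_herm[OF i j] i j by (auto simp: bordered_def A3_def N_def)
    next
      case False
      then show ?thesis
        using i j by (auto simp: bordered_def A3_def N_def)
    qed
  qed (use A'c in \<open>auto simp: bordered_def A3_def N_def\<close>)
  ultimately show ?thesis
    unfolding A'_def by blast
qed

lemma unit_eigenvector_exists:
  assumes A: "(A :: complex mat) \<in> carrier_mat N N" and N: "0 < N"
  obtains e v where "v \<in> carrier_vec N" "vnorm v = 1" "A *\<^sub>v v = e \<cdot>\<^sub>v v"
proof -
  obtain e v0 where "eigenvector A v0 e"
    using spectrum_non_empty[OF A N] unfolding spectrum_def eigenvalue_def by auto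
  then have v0: "v0 \<in> carrier_vec N" "v0 \<noteq> 0\<^sub>v N" "A *\<^sub>v v0 = e \<cdot>\<^sub>v v0"
    using A by (auto simp: eigenvector_def)
  define v where "v = complex_of_real (1 / vnorm v0) \<cdot>\<^sub>v v0"
  have "v \<in> carrier_vec N" "vnorm v = 1" "A *\<^sub>v v = e \<cdot>\<^sub>v v"
    using v0 vnorm_normalize[OF v0(1,2)] A
    by (auto simp: v_def mult_mat_vec smult_smult_assoc mult.commute)
  then show ?thesis ..
qed

theorem hermitian_unitarily_diagonalizable:
  "hermitian_mat N A \<Longrightarrow> \<exists>Q \<mu>. unitary_mat N Q \<and> A * Q = Q * mat_diag N \<mu>"
proof (induction N arbitrary: A)
  case 0
  have "unitary_mat 0 (1\<^sub>m 0)"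
    by (rule unitary_matI_orthonormal_cols) auto
  moreover have "A * 1\<^sub>m 0 = 1\<^sub>m 0 * mat_diag 0 (\<lambda>_. 0)"
    using hermitian_mat_carrier[OF 0] by (intro eq_matI) (auto simp: mat_diag_def)
  ultimately show ?case by blast
next
  case (Suc n)
  define N where "N = Suc n"
  have Ac: "A \<in> carrier_mat N N"
    using Suc.prems by (simp add: N_def hermitian_mat_carrier)
  obtain e v where v: "v \<in> carrier_vec N" "vnorm v = 1" "A *\<^sub>v v = e \<cdot>\<^sub>v v"
    using unit_eigenvector_exists[OF Ac, of thesis] by (simp add: N_def)
  obtain W where W: "unitary_mat N W" and Wv: "col W 0 = v"
    using unitary_mat_with_first_col[OF v(1,2)] by blast
  obtain A3 where A3: "hermitian_mat n A3" and WAW: "mat_adjoint W * (A * W) = bordered e A3"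
    using hermitian_unitary_conj_bordered[OF Suc.prems W[unfolded N_def]] v(3) Wv by blast
  obtain V \<mu> where V: "unitary_mat n V" and AV: "A3 * V = V * mat_diag n \<mu>"
    using Suc.IH[OF A3] by blast
  have Wc: "W \<in> carrier_mat N N" and Vc: "V \<in> carrier_mat n n" and A3c: "A3 \<in> carrier_mat n n"
    using W V A3 by (auto simp: unitary_mat_carrier hermitian_mat_carrier)
  have AW: "A * W = W * bordered e A3"
  proof -
    have "W * bordered e A3 = (W * mat_adjoint W) * (A * W)"
      unfolding WAW[symmetric] using Wc Ac by (simp add: assoc_mult_mat[of _ N N _ N _ N])
    then show ?thesis
      using unitary_mat_right_inverse[OF W] Wc Ac by simp
  qed
  have Fc: "bordered 1 V \<in> carrier_mat N N" and Bc: "bordered e A3 \<in> carrier_mat N N"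
    using Vc A3c by (simp_all add: N_def)
  have "A * (W * bordered 1 V) = (A * W) * bordered 1 V"
    using assoc_mult_mat[OF Ac Wc Fc] by simp
  also have "\<dots> = W * (bordered e A3 * bordered 1 V)"
    unfolding AW by (rule assoc_mult_mat[OF Wc Bc Fc])
  also have "bordered e A3 * bordered 1 V = bordered 1 V * mat_diag N (case_nat e \<mu>)"
    using A3c Vc AV by (simp add: N_def mat_diag_Suc bordered_mult[of _ n n _ n])
  finally have "A * (W * bordered 1 V) = (W * bordered 1 V) * mat_diag N (case_nat e \<mu>)"
    using Wc Vc by (simp add: N_def assoc_mult_mat[of _ "Suc n" "Suc n" _ "Suc n" _ "Suc n"])
  moreover have "unitary_mat N (W * bordered 1 V)"
    using unitary_mat_mult[OF W] unitary_mat_bordered[OF V] by (simp add: N_def)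
  ultimately show ?case
    unfolding N_def by blast
qed

abbreviation fixed_space :: "nat \<Rightarrow> complex mat \<Rightarrow> complex vec set" where
  "fixed_space N A \<equiv> {v \<in> carrier_vec N. A *\<^sub>v v = v}"

lemma fixed_space_diff:
  assumes "A \<in> carrier_mat N N" "a \<in> fixed_space N A" "b \<in> fixed_space N A"
  shows "a - b \<in> fixed_space N A"
  using assms mult_minus_distrib_mat_vec[of A N N a b] by auto

lemma fixed_space_add:
  assumes "A \<in> carrier_mat N N" "a \<in> fixed_space N A" "b \<in> fixed_space N A"
  shows "a + b \<in> fixed_space N A"
  using assms mult_add_distrib_mat_vec[of A N N a b] by auto

lemma proj_eqI:
  assumes W: "W \<subseteq> carrier_vec N" "\<forall>a\<in>W. \<forall>b\<in>W. a - b \<in> W"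
    and x: "x \<in> carrier_vec N" and p: "p \<in> W" and orth: "\<forall>z\<in>W. cinner (x - p) z = 0"
  shows "proj W x = p"
  unfolding proj_def
proof (rule the_equality)
  show "p \<in> W \<and> (\<forall>z\<in>W. cinner (x - p) z = 0)"
    using p orth by blast
next
  fix w assume w: "w \<in> W \<and> (\<forall>z\<in>W. cinner (x - w) z = 0)"
  then have wc: "w \<in> carrier_vec N" and pc: "p \<in> carrier_vec N" and d: "w - p \<in> W"
    using W p by auto
  have "w - p = (x - p) - (x - w)"
    using x wc pc by (intro eq_vecI) auto
  then have "cinner (w - p) (w - p) = cinner (x - p) (w - p) - cinner (x - w) (w - p)"
    using cinner_diff_left[of "x - p" N "x - w" "w - p"] x wc pc by simp
  also have "\<dots> = 0"
    using orth w d by simp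
  finally have wp: "w - p = 0\<^sub>v N"
    using vnorm_eq_0_iff[of "w - p" N] wc pc by (simp add: cinner_self)
  show "w = p"
  proof (rule eq_vecI)
    fix i assume "i < dim_vec p"
    then show "w $ i = p $ i"
      using arg_cong[OF wp, of "\<lambda>v. v $ i"] wc pc by simp
  qed (use wc pc in simp)
qed

lemma hermitian_cinner_fixed_eigenvector:
  assumes A: "hermitian_mat N A" and z: "z \<in> fixed_space N A"
    and u: "u \<in> carrier_vec N" "A *\<^sub>v u = \<mu> \<cdot>\<^sub>v u" and ne: "\<mu> \<noteq> 1"
  shows "cinner z u = 0"
proof -
  have "cinner z u = cinner (A *\<^sub>v z) u"
    using z by simp
  also have "\<dots> = cnj \<mu> * cinner z u"
    using hermitian_cinner[OF A _ u(1), of z] z u by (simp add: cinner_smult_right)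
  finally have "(1 - cnj \<mu>) * cinner z u = 0"
    by (simp add: algebra_simps)
  moreover have "cnj \<mu> \<noteq> 1"
    using ne by (metis complex_cnj_cnj complex_cnj_one)
  ultimately show ?thesis by simp
qed

lemma mat_diag_mult_vec:
  assumes "z \<in> carrier_vec N"
  shows "mat_diag N \<mu> *\<^sub>v z = vec N (\<lambda>i. \<mu> i * z $ i)"
proof (rule eq_vecI)
  fix i assume "i < dim_vec (vec N (\<lambda>i. \<mu> i * z $ i))"
  then have i: "i < N" by simp
  have "(mat_diag N \<mu> *\<^sub>v z) $ i = (\<Sum>r\<in>{0..<N}. (if i = r then \<mu> r else 0) * z $ r)"
    using i assms by (simp add: mat_diag_def scalar_prod_def)
  also have "\<dots> = (\<Sum>r\<in>{0..<N}. if r = i then \<mu> i * z $ i else 0)"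
    by (intro sum.cong) auto
  finally show "(mat_diag N \<mu> *\<^sub>v z) $ i = vec N (\<lambda>i. \<mu> i * z $ i) $ i"
    using i by simp
qed (simp add: mat_diag_def)

locale hermitian_diagonalization =
  fixes N :: nat and A Q :: "complex mat" and \<mu> :: "nat \<Rightarrow> complex"
  assumes hermitian: "hermitian_mat N A" and unitary: "unitary_mat N Q"
    and diagonalizes: "A * Q = Q * mat_diag N \<mu>"
begin

lemma carriers: "A \<in> carrier_mat N N" "Q \<in> carrier_mat N N" "mat_adjoint Q \<in> carrier_mat N N"
  using hermitian unitary by (auto simp: hermitian_mat_carrier unitary_mat_carrier)

lemma A_mult_Q_vec:
  assumes \<zeta>: "\<zeta> \<in> carrier_vec N"
  shows "A *\<^sub>v (Q *\<^sub>v \<zeta>) = Q *\<^sub>v vec N (\<lambda>i. \<mu> i * \<zeta> $ i)"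
proof -
  have "A *\<^sub>v (Q *\<^sub>v \<zeta>) = (Q * mat_diag N \<mu>) *\<^sub>v \<zeta>"
    using carriers \<zeta> by (simp add: diagonalizes[symmetric] assoc_mult_mat_vec)
  also have "\<dots> = Q *\<^sub>v vec N (\<lambda>i. \<mu> i * \<zeta> $ i)"
    using assoc_mult_mat_vec[OF carriers(2) mat_diag_dim \<zeta>] \<zeta> by (simp add: mat_diag_mult_vec)
  finally show ?thesis .
qed

lemma col_eigenvector:
  assumes i: "i < N"
  shows "A *\<^sub>v col Q i = \<mu> i \<cdot>\<^sub>v col Q i"
proof -
  have "A *\<^sub>v col Q i = col (Q * mat_diag N \<mu>) i"
    using col_mult2[of A N N Q N i] carriers i by (simp add: diagonalizes)
  also have "\<dots> = \<mu> i \<cdot>\<^sub>v col Q i"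
    using carriers i by (intro eq_vecI) (simp_all add: mat_diag_mult_right)
  finally show ?thesis .
qed

lemma eigenvalue_in_spectrum:
  assumes i: "i < N"
  shows "\<mu> i \<in> spectrum A"
proof -
  have "col Q i \<noteq> 0\<^sub>v N"
  proof
    assume "col Q i = 0\<^sub>v N"
    then have "cinner (col Q i) (col Q i) = 0"
      by (simp add: cinner_def)
    then show False
      using unitary_mat_cinner_cols[OF unitary i i] by simp
  qed
  then have "eigenvector A (col Q i) (\<mu> i)"
    using col_eigenvector[OF i] carriers unfolding eigenvector_def by auto
  then show ?thesis
    by (auto simp: spectrum_def eigenvalue_def)
qed

lemma adjoint_Q_mult_vec_index: "y \<in> carrier_vec N \<Longrightarrow> i < N \<Longrightarrow> (mat_adjoint Q *\<^sub>v y) $ i = cinner y (col Q i)"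
  using carriers by (simp add: cinner_def scalar_prod_def atLeast0LessThan mult.commute)

lemma Q_mult_adjoint_Q_vec:
  assumes y: "y \<in> carrier_vec N"
  shows "Q *\<^sub>v (mat_adjoint Q *\<^sub>v y) = y"
proof -
  have "Q *\<^sub>v (mat_adjoint Q *\<^sub>v y) = (Q * mat_adjoint Q) *\<^sub>v y"
    using assoc_mult_mat_vec[OF carriers(2,3) y] by simp
  then show ?thesis
    using unitary_mat_right_inverse[OF unitary] y by simp
qed


lemma fixed_space_decomposition:
  assumes x: "x \<in> carrier_vec N"
  shows "\<exists>e\<in>fixed_space N A. \<forall>z\<in>fixed_space N A. cinner (x - e) z = 0"
proof -
  define \<zeta> where "\<zeta> = mat_adjoint Q *\<^sub>v x"
  define y1 where "y1 = vec N (\<lambda>i. if \<mu> i = 1 then \<zeta> $ i else 0)"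
  define y2 where "y2 = vec N (\<lambda>i. if \<mu> i = 1 then 0 else \<zeta> $ i)"
  have y1: "y1 \<in> carrier_vec N" and y2: "y2 \<in> carrier_vec N"
    by (auto simp: y1_def y2_def)
  have "A *\<^sub>v (Q *\<^sub>v y1) = Q *\<^sub>v y1"
    unfolding A_mult_Q_vec[OF y1] by (intro arg_cong[of _ _ "\<lambda>v. Q *\<^sub>v v"] eq_vecI) (auto simp: y1_def)
  then have e: "Q *\<^sub>v y1 \<in> fixed_space N A"
    using carriers y1 by simp
  have \<zeta>: "\<zeta> \<in> carrier_vec N"
    unfolding \<zeta>_def using carriers(3) x by (rule mult_mat_vec_carrier)
  have "y1 + y2 = \<zeta>"
    using \<zeta> by (intro eq_vecI) (auto simp: y1_def y2_def)
  then have "x = Q *\<^sub>v y1 + Q *\<^sub>v y2"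
    using Q_mult_adjoint_Q_vec[OF x] mult_add_distrib_mat_vec[OF carriers(2) y1 y2] by (simp add: \<zeta>_def)
  then have xe: "x - Q *\<^sub>v y1 = Q *\<^sub>v y2"
    using carriers y1 y2 by (intro eq_vecI) auto
  have "cinner (x - Q *\<^sub>v y1) z = 0" if z: "z \<in> fixed_space N A" for z
  proof -
    have zc: "z \<in> carrier_vec N"
      using z by simp
    have "cinner (x - Q *\<^sub>v y1) z = cinner y2 (mat_adjoint Q *\<^sub>v z)"
      unfolding xe by (rule cinner_mult_mat_vec_left[OF carriers(2) y2 zc])
    also have "\<dots> = (\<Sum>i<N. y2 $ i * cnj ((mat_adjoint Q *\<^sub>v z) $ i))"
      using y2 by (simp add: cinner_def)
    also have "\<dots> = (\<Sum>i<N. y2 $ i * cnj (cinner z (col Q i)))"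
      by (intro sum.cong refl) (simp add: adjoint_Q_mult_vec_index zc)
    also have "\<dots> = 0"
    proof (rule sum.neutral, intro ballI)
      fix i assume "i \<in> {..<N}"
      then show "y2 $ i * cnj (cinner z (col Q i)) = 0"
        using hermitian_cinner_fixed_eigenvector[OF hermitian z _ col_eigenvector] carriers
        by (auto simp: y2_def)
    qed
    finally show ?thesis .
  qed
  then show ?thesis
    using e by blast
qed

lemma vnorm_le_off_fixed_space:
  assumes l: "0 \<le> l" and spec: "\<forall>\<nu>\<in>spectrum A. \<nu> \<noteq> 1 \<longrightarrow> cmod \<nu> \<le> l"
    and f: "f \<in> carrier_vec N" and orth: "\<forall>z\<in>fixed_space N A. cinner f z = 0"
  shows "vnorm (A *\<^sub>v f) \<le> l * vnorm f"
proof -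
  define \<zeta> where "\<zeta> = mat_adjoint Q *\<^sub>v f"
  have \<zeta>: "\<zeta> \<in> carrier_vec N"
    unfolding \<zeta>_def using carriers(3) f by (rule mult_mat_vec_carrier)
  have \<zeta>_fixed: "\<zeta> $ i = 0" if "i < N" "\<mu> i = 1" for i
    using orth col_eigenvector[of i] carriers that adjoint_Q_mult_vec_index[OF f] by (simp add: \<zeta>_def)
  have bound: "(cmod (\<mu> i * \<zeta> $ i))\<^sup>2 \<le> l\<^sup>2 * (cmod (\<zeta> $ i))\<^sup>2" if i: "i < N" for i
  proof (cases "\<mu> i = 1")
    case True
    then show ?thesis using \<zeta>_fixed[OF i] by simp
  next
    case False
    then have "(cmod (\<mu> i))\<^sup>2 \<le> l\<^sup>2"
      using spec eigenvalue_in_spectrum[OF i] by (simp add: power_mono)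
    then show ?thesis
      by (simp add: norm_mult power_mult_distrib mult_right_mono)
  qed
  have "(vnorm (A *\<^sub>v f))\<^sup>2 = (vnorm (vec N (\<lambda>i. \<mu> i * \<zeta> $ i)))\<^sup>2"
    using Q_mult_adjoint_Q_vec[OF f] A_mult_Q_vec[OF \<zeta>] unitary_vnorm[OF unitary] by (simp add: \<zeta>_def)
  also have "\<dots> = (\<Sum>i<N. (cmod (\<mu> i * \<zeta> $ i))\<^sup>2)"
    by (simp add: vnorm_power2)
  also have "\<dots> \<le> (\<Sum>i<N. l\<^sup>2 * (cmod (\<zeta> $ i))\<^sup>2)"
    by (rule sum_mono) (simp add: bound)
  also have "\<dots> = l\<^sup>2 * (vnorm \<zeta>)\<^sup>2"
    using \<zeta> by (simp add: vnorm_power2 sum_distrib_left)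
  also have "vnorm \<zeta> = vnorm f"
    unfolding \<zeta>_def by (rule unitary_vnorm[OF unitary_mat_adjoint[OF unitary] f])
  also have "l\<^sup>2 * (vnorm f)\<^sup>2 = (l * vnorm f)\<^sup>2"
    by (simp add: power_mult_distrib)
  finally show ?thesis
    by (rule power2_le_imp_le) (simp add: l)
qed

end

lemma hermitian_proj_fixed_space:
  assumes A: "hermitian_mat N A" and x: "x \<in> carrier_vec N"
  shows "proj (fixed_space N A) x \<in> fixed_space N A"
    and "\<forall>z\<in>fixed_space N A. cinner (x - proj (fixed_space N A) x) z = 0"
proof -
  obtain Q \<mu> where "hermitian_diagonalization N A Q \<mu>"
    using hermitian_unitarily_diagonalizable[OF A] A by (auto simp: hermitian_diagonalization_def)
  then obtain e where e: "e \<in> fixed_space N A" and orth: "\<forall>z\<in>fixed_space N A. cinner (x - e) z = 0"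
    using hermitian_diagonalization.fixed_space_decomposition[OF _ x] by blast
  have "proj (fixed_space N A) x = e"
    using fixed_space_diff[OF hermitian_mat_carrier[OF A]] by (intro proj_eqI[OF _ _ x e orth]) auto
  then show "proj (fixed_space N A) x \<in> fixed_space N A"
    and "\<forall>z\<in>fixed_space N A. cinner (x - proj (fixed_space N A) x) z = 0"
    using e orth by auto
qed

lemma hermitian_vnorm_le_off_fixed_space:
  assumes A: "hermitian_mat N A" and l: "0 \<le> l" and spec: "\<forall>\<nu>\<in>spectrum A. \<nu> \<noteq> 1 \<longrightarrow> cmod \<nu> \<le> l"
    and f: "f \<in> carrier_vec N" and orth: "\<forall>z\<in>fixed_space N A. cinner f z = 0"
  shows "vnorm (A *\<^sub>v f) \<le> l * vnorm f"
proof -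
  obtain Q \<mu> where "hermitian_diagonalization N A Q \<mu>"
    using hermitian_unitarily_diagonalizable[OF A] A by (auto simp: hermitian_diagonalization_def)
  then show ?thesis
    using hermitian_diagonalization.vnorm_le_off_fixed_space[OF _ l spec f orth] by blast
qed

context
  fixes N :: nat and A :: "complex mat"
  assumes A: "hermitian_mat N A"
begin

lemma proj_fixed_space_carrier: "x \<in> carrier_vec N \<Longrightarrow> proj (fixed_space N A) x \<in> carrier_vec N"
  using hermitian_proj_fixed_space(1)[OF A] by blast

lemma proj_fixed_space_orthogonal:
  assumes x: "x \<in> carrier_vec N"
  shows "cinner (proj (fixed_space N A) x) (x - proj (fixed_space N A) x) = 0"
proof -
  have "cinner (x - proj (fixed_space N A) x) (proj (fixed_space N A) x) = 0"
    using hermitian_proj_fixed_space[OF A x] by blast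
  then show ?thesis
    using cinner_commute[of "x - proj (fixed_space N A) x" N "proj (fixed_space N A) x"]
      proj_fixed_space_carrier[OF x] x by simp
qed

lemma vnorm_power2_proj_fixed_space:
  assumes x: "x \<in> carrier_vec N"
  shows "(vnorm x)\<^sup>2 = (vnorm (proj (fixed_space N A) x))\<^sup>2 + (vnorm (x - proj (fixed_space N A) x))\<^sup>2"
proof -
  have sum: "proj (fixed_space N A) x + (x - proj (fixed_space N A) x) = x"
    using x proj_fixed_space_carrier[OF x] by (intro eq_vecI) auto
  have "x - proj (fixed_space N A) x \<in> carrier_vec N"
    using x proj_fixed_space_carrier[OF x] by simp
  from vnorm_add_power2_orthogonal[OF proj_fixed_space_carrier[OF x] this proj_fixed_space_orthogonal[OF x]]
  show ?thesis
    unfolding sum .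
qed

lemma vnorm_proj_fixed_space_le:
  assumes x: "x \<in> carrier_vec N"
  shows "vnorm (proj (fixed_space N A) x) \<le> vnorm x"
proof (rule power2_le_imp_le)
  show "(vnorm (proj (fixed_space N A) x))\<^sup>2 \<le> (vnorm x)\<^sup>2"
    using vnorm_power2_proj_fixed_space[OF x] by simp
qed simp

lemma proj_fixed_space_add:
  assumes u: "u \<in> carrier_vec N" and w: "w \<in> carrier_vec N"
  shows "proj (fixed_space N A) (u + w) = proj (fixed_space N A) u + proj (fixed_space N A) w"
proof (rule proj_eqI[where N = N])
  let ?P = "proj (fixed_space N A)"
  have Ac: "A \<in> carrier_mat N N"
    using A by (rule hermitian_mat_carrier)
  have Pu: "?P u \<in> carrier_vec N" and Pw: "?P w \<in> carrier_vec N"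
    using proj_fixed_space_carrier u w by auto
  show "fixed_space N A \<subseteq> carrier_vec N"
    by auto
  show "\<forall>a\<in>fixed_space N A. \<forall>b\<in>fixed_space N A. a - b \<in> fixed_space N A"
    by (intro ballI fixed_space_diff[OF Ac])
  show "?P u + ?P w \<in> fixed_space N A"
    by (rule fixed_space_add[OF Ac hermitian_proj_fixed_space(1)[OF A u] hermitian_proj_fixed_space(1)[OF A w]])
  have split: "(u + w) - (?P u + ?P w) = (u - ?P u) + (w - ?P w)"
    using u w Pu Pw by (intro eq_vecI) auto
  show "\<forall>z\<in>fixed_space N A. cinner ((u + w) - (?P u + ?P w)) z = 0"
  proof
    fix z assume z: "z \<in> fixed_space N A"
    have "cinner ((u + w) - (?P u + ?P w)) z = cinner (u - ?P u) z + cinner (w - ?P w) z"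
      unfolding split using u w Pu Pw by (intro cinner_add_left[of _ N]) auto
    moreover have "cinner (u - ?P u) z = 0" and "cinner (w - ?P w) z = 0"
      using bspec[OF hermitian_proj_fixed_space(2)[OF A u] z] bspec[OF hermitian_proj_fixed_space(2)[OF A w] z]
      by simp_all
    ultimately show "cinner ((u + w) - (?P u + ?P w)) z = 0"
      by simp
  qed
qed (use u w in simp)

lemma vnorm_power2_hermitian_le:
  assumes l: "0 \<le> l" and spec: "\<forall>\<nu>\<in>spectrum A. \<nu> \<noteq> 1 \<longrightarrow> cmod \<nu> \<le> l"
    and x: "x \<in> carrier_vec N"
  shows "(vnorm (A *\<^sub>v x))\<^sup>2 \<le>
    (vnorm (proj (fixed_space N A) x))\<^sup>2 + l\<^sup>2 * ((vnorm x)\<^sup>2 - (vnorm (proj (fixed_space N A) x))\<^sup>2)"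
proof -
  define e where "e = proj (fixed_space N A) x"
  define f where "f = x - e"
  have Ac: "A \<in> carrier_mat N N"
    using A by (rule hermitian_mat_carrier)
  have e: "e \<in> carrier_vec N" "A *\<^sub>v e = e" and f: "f \<in> carrier_vec N"
    and f_orth: "\<forall>z\<in>fixed_space N A. cinner f z = 0"
    using hermitian_proj_fixed_space[OF A x] x by (auto simp: e_def f_def)
  have "x = e + f"
    using e x by (intro eq_vecI) (auto simp: f_def)
  then have "A *\<^sub>v x = e + A *\<^sub>v f"
    using mult_add_distrib_mat_vec[OF Ac e(1) f] e by simp
  moreover have "cinner e (A *\<^sub>v f) = 0"
    using hermitian_cinner[OF A f e(1)] f_orth e cinner_commute[of e N "A *\<^sub>v f"] Ac f by auto
  ultimately have "(vnorm (A *\<^sub>v x))\<^sup>2 = (vnorm e)\<^sup>2 + (vnorm (A *\<^sub>v f))\<^sup>2"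
    using vnorm_add_power2_orthogonal[OF e(1), of "A *\<^sub>v f"] Ac f by simp
  moreover have "(vnorm (A *\<^sub>v f))\<^sup>2 \<le> (l * vnorm f)\<^sup>2"
    using hermitian_vnorm_le_off_fixed_space[OF A l spec f f_orth] by (rule power_mono) simp
  moreover have "(vnorm f)\<^sup>2 = (vnorm x)\<^sup>2 - (vnorm e)\<^sup>2"
    using vnorm_power2_proj_fixed_space[OF x] by (simp add: e_def f_def)
  ultimately show ?thesis
    unfolding e_def by (simp add: power_mult_distrib)
qed

lemma vnorm_hermitian_le:
  assumes spec: "\<forall>\<nu>\<in>spectrum A. \<nu> \<noteq> 1 \<longrightarrow> cmod \<nu> \<le> 1" and x: "x \<in> carrier_vec N"
  shows "vnorm (A *\<^sub>v x) \<le> vnorm x"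
proof -
  have "(vnorm (A *\<^sub>v x))\<^sup>2 \<le> (vnorm x)\<^sup>2"
    using vnorm_power2_hermitian_le[OF _ spec x] by simp
  then show ?thesis
    by (rule power2_le_imp_le) simp
qed

end

section \<open>The shrinkage theorem\<close>

(* Outside 0 \<le> l, d < 1 the trivial value 1: the main theorem applies it to a \<lambda> and a d that need
   not lie in that range (\<lambda> is a Max over a possibly empty set, and d \<ge> 0 is not assumed). *)
definition shrinkage_factor :: "real \<Rightarrow> real \<Rightarrow> real" where
  "shrinkage_factor l d =
     (if 0 \<le> l \<and> l < 1 \<and> 0 \<le> d \<and> d < 1 then sqrt (1 - (1 - l\<^sup>2) * (1 - d)\<^sup>2 / 4) else 1)"

lemma shrinkage_factor_bounds:
  shows "0 \<le> shrinkage_factor l d" and "shrinkage_factor l d \<le> 1"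
    and "0 \<le> l \<Longrightarrow> l < 1 \<Longrightarrow> 0 \<le> d \<Longrightarrow> d < 1 \<Longrightarrow> shrinkage_factor l d < 1"
proof -
  have "0 < (1 - l\<^sup>2) * (1 - d)\<^sup>2 \<and> (1 - l\<^sup>2) * (1 - d)\<^sup>2 \<le> 1"
    if "0 \<le> l" "l < 1" "0 \<le> d" "d < 1"
  proof -
    have "l\<^sup>2 < 1" and "(1 - d)\<^sup>2 \<le> 1"
      using that by (auto simp: power_less_one_iff abs_square_le_1)
    then show ?thesis
      using that mult_le_one[of "1 - l\<^sup>2" "(1 - d)\<^sup>2"] by auto
  qed
  then show "0 \<le> shrinkage_factor l d" and "shrinkage_factor l d \<le> 1"
    and "0 \<le> l \<Longrightarrow> l < 1 \<Longrightarrow> 0 \<le> d \<Longrightarrow> d < 1 \<Longrightarrow> shrinkage_factor l d < 1"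
    by (auto simp: shrinkage_factor_def)
qed

text \<open>
  Read a = |P x| and b = |x - P x| for the parts of x = s in and off the fixed space of A, Y = |U A x|,
  p = |P (U A x)| and Z = |A U A x|. If b is large, already the first application of A contracts;
  otherwise x lies mostly in the fixed space, U moves it out of there by the factor d, and the second
  application of A contracts.
\<close>

lemma shrinkage_estimate:
  fixes l d s a b Y p Z :: real
  assumes l: "0 \<le> l" "l < 1" and d: "0 \<le> d" "d < 1"
    and ab: "0 \<le> a" "0 \<le> b" "0 \<le> s" "s\<^sup>2 = a\<^sup>2 + b\<^sup>2"
    and Y: "Y\<^sup>2 \<le> a\<^sup>2 + l\<^sup>2 * b\<^sup>2"
    and p: "0 \<le> p" "p \<le> Y" "p \<le> d * a + l * b"
    and Z: "Z\<^sup>2 \<le> p\<^sup>2 + l\<^sup>2 * (Y\<^sup>2 - p\<^sup>2)"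
  shows "Z\<^sup>2 \<le> (1 - (1 - l\<^sup>2) * (1 - d)\<^sup>2 / 4) * s\<^sup>2"
proof -
  have l2: "0 \<le> 1 - l\<^sup>2"
    using l by (simp add: abs_square_le_1)
  have Z': "Z\<^sup>2 \<le> l\<^sup>2 * Y\<^sup>2 + (1 - l\<^sup>2) * p\<^sup>2"
    using Z by (simp add: algebra_simps)
  show ?thesis
  proof (cases "(1 - d) * s / 2 \<le> b")
    case True
    have "(1 - l\<^sup>2) * p\<^sup>2 \<le> (1 - l\<^sup>2) * Y\<^sup>2"
      using p l2 by (intro mult_left_mono power_mono) auto
    then have "Z\<^sup>2 \<le> s\<^sup>2 - (1 - l\<^sup>2) * b\<^sup>2"
      using Z' Y ab(4) by (simp add: algebra_simps)
    also have "(1 - l\<^sup>2) * ((1 - d) * s / 2)\<^sup>2 \<le> (1 - l\<^sup>2) * b\<^sup>2"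
      using True d ab l2 by (intro mult_left_mono power_mono) auto
    then have "s\<^sup>2 - (1 - l\<^sup>2) * b\<^sup>2 \<le> (1 - (1 - l\<^sup>2) * (1 - d)\<^sup>2 / 4) * s\<^sup>2"
      by (simp add: field_simps power2_eq_square)
    finally show ?thesis .
  next
    case False
    have "a \<le> s"
      using ab by (metis le_add_same_cancel1 power2_le_imp_le zero_le_power2)
    then have "p \<le> d * s + b"
      using p(3) d ab l mult_left_mono[of a s d] mult_left_le_one_le[of b l] by linarith
    then have "p\<^sup>2 \<le> ((1 + d) * s / 2)\<^sup>2"
      using False p(1) by (intro power_mono) (auto simp: algebra_simps)
    moreover have "Y\<^sup>2 \<le> s\<^sup>2"
      using Y ab(4) mult_left_le_one_le[of "b\<^sup>2" "l\<^sup>2"] l2 by simp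
    ultimately have "Z\<^sup>2 \<le> l\<^sup>2 * s\<^sup>2 + (1 - l\<^sup>2) * ((1 + d) * s / 2)\<^sup>2"
      using Z' l2 mult_left_mono[of "Y\<^sup>2" "s\<^sup>2" "l\<^sup>2"] mult_left_mono[of "p\<^sup>2" _ "1 - l\<^sup>2"] by force
    also have "\<dots> = (1 - (1 - l\<^sup>2) * (1 - d)\<^sup>2 / 4) * s\<^sup>2 - (1 - l\<^sup>2) * s\<^sup>2 * (1 - d\<^sup>2) / 2"
      by (simp add: field_simps power2_eq_square)
    also have "\<dots> \<le> (1 - (1 - l\<^sup>2) * (1 - d)\<^sup>2 / 4) * s\<^sup>2"
      using l2 d by (simp add: abs_square_le_1)
    finally show ?thesis .
  qed
qed

lemma vnorm_proj_unitary_hermitian_le: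
  assumes A: "hermitian_mat N A" and U: "unitary_mat N U" and l: "0 \<le> l"
    and spec: "\<forall>\<nu>\<in>spectrum A. \<nu> \<noteq> 1 \<longrightarrow> cmod \<nu> \<le> l"
    and shrink: "\<forall>v\<in>fixed_space N A. vnorm (proj (fixed_space N A) (U *\<^sub>v v)) \<le> d * vnorm v"
    and x: "x \<in> carrier_vec N"
  defines "e \<equiv> proj (fixed_space N A) x"
  shows "vnorm (proj (fixed_space N A) (U *\<^sub>v (A *\<^sub>v x))) \<le> d * vnorm e + l * vnorm (x - e)"
proof -
  let ?P = "proj (fixed_space N A)"
  define f where "f = x - e"
  have Ac: "A \<in> carrier_mat N N" and Uc: "U \<in> carrier_mat N N"
    using A U by (auto simp: hermitian_mat_carrier unitary_mat_carrier)
  have e: "e \<in> fixed_space N A" and f: "f \<in> carrier_vec N"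
    and f_orth: "\<forall>z\<in>fixed_space N A. cinner f z = 0"
    using hermitian_proj_fixed_space[OF A x] x by (auto simp: e_def f_def)
  have Af: "A *\<^sub>v f \<in> carrier_vec N" and Ue: "U *\<^sub>v e \<in> carrier_vec N" and UAf: "U *\<^sub>v (A *\<^sub>v f) \<in> carrier_vec N"
    using Ac Uc e f by auto
  have "x = e + f"
    using e x by (intro eq_vecI) (auto simp: f_def)
  then have "U *\<^sub>v (A *\<^sub>v x) = U *\<^sub>v e + U *\<^sub>v (A *\<^sub>v f)"
    using mult_add_distrib_mat_vec[OF Ac _ f, of e] mult_add_distrib_mat_vec[OF Uc _ Af, of e] e by simp
  then have "?P (U *\<^sub>v (A *\<^sub>v x)) = ?P (U *\<^sub>v e) + ?P (U *\<^sub>v (A *\<^sub>v f))"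
    using proj_fixed_space_add[OF A Ue UAf] by simp
  then have "vnorm (?P (U *\<^sub>v (A *\<^sub>v x))) \<le> vnorm (?P (U *\<^sub>v e)) + vnorm (?P (U *\<^sub>v (A *\<^sub>v f)))"
    using vnorm_triangle[OF proj_fixed_space_carrier[OF A Ue] proj_fixed_space_carrier[OF A UAf]] by simp
  also have "vnorm (?P (U *\<^sub>v e)) \<le> d * vnorm e"
    using bspec[OF shrink e] .
  also have "vnorm (?P (U *\<^sub>v (A *\<^sub>v f))) \<le> vnorm (A *\<^sub>v f)"
    using vnorm_proj_fixed_space_le[OF A UAf] unitary_vnorm[OF U Af] by simp
  also have "vnorm (A *\<^sub>v f) \<le> l * vnorm f"
    by (rule hermitian_vnorm_le_off_fixed_space[OF A l spec f f_orth])
  finally show ?thesis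
    by (simp add: f_def)
qed

lemma vnorm_square_shrinkage:
  assumes A: "hermitian_mat N A" and U: "unitary_mat N U"
    and l: "0 \<le> l" "l < 1" and d: "0 \<le> d" "d < 1"
    and spec: "\<forall>\<nu>\<in>spectrum A. \<nu> \<noteq> 1 \<longrightarrow> cmod \<nu> \<le> l"
    and shrink: "\<forall>v\<in>fixed_space N A. vnorm (proj (fixed_space N A) (U *\<^sub>v v)) \<le> d * vnorm v"
    and x: "x \<in> carrier_vec N"
  shows "vnorm ((U * A) ^\<^sub>m 2 *\<^sub>v x) \<le> shrinkage_factor l d * vnorm x"
proof -
  let ?P = "proj (fixed_space N A)"
  define y where "y = U *\<^sub>v (A *\<^sub>v x)"
  have Ac: "A \<in> carrier_mat N N" and Uc: "U \<in> carrier_mat N N"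
    using A U by (auto simp: hermitian_mat_carrier unitary_mat_carrier)
  have Ax: "A *\<^sub>v x \<in> carrier_vec N" and y: "y \<in> carrier_vec N" and Ay: "A *\<^sub>v y \<in> carrier_vec N"
    using Ac Uc x by (auto simp: y_def)
  have UA: "U * A \<in> carrier_mat N N" and UAv: "\<And>v. v \<in> carrier_vec N \<Longrightarrow> (U * A) *\<^sub>v v = U *\<^sub>v (A *\<^sub>v v)"
    using Ac Uc by (auto simp: assoc_mult_mat_vec)
  have "(U * A) ^\<^sub>m 2 *\<^sub>v x = (U * A) *\<^sub>v ((U * A) *\<^sub>v x)"
    using assoc_mult_mat_vec[OF UA UA x] UA by (simp add: numeral_2_eq_2)
  also have "\<dots> = U *\<^sub>v (A *\<^sub>v y)"
    using UAv x y by (simp add: y_def)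
  finally have "(U * A) ^\<^sub>m 2 *\<^sub>v x = U *\<^sub>v (A *\<^sub>v y)" .
  then have "vnorm ((U * A) ^\<^sub>m 2 *\<^sub>v x) = vnorm (A *\<^sub>v y)"
    using unitary_vnorm[OF U Ay] by simp
  moreover have "(vnorm (A *\<^sub>v y))\<^sup>2 \<le> (1 - (1 - l\<^sup>2) * (1 - d)\<^sup>2 / 4) * (vnorm x)\<^sup>2"
  proof (rule shrinkage_estimate[OF l d])
    show "(vnorm x)\<^sup>2 = (vnorm (?P x))\<^sup>2 + (vnorm (x - ?P x))\<^sup>2"
      by (rule vnorm_power2_proj_fixed_space[OF A x])
    show "(vnorm y)\<^sup>2 \<le> (vnorm (?P x))\<^sup>2 + l\<^sup>2 * (vnorm (x - ?P x))\<^sup>2"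
      using vnorm_power2_hermitian_le[OF A l(1) spec x] vnorm_power2_proj_fixed_space[OF A x]
        unitary_vnorm[OF U Ax] by (simp add: y_def)
    show "vnorm (?P y) \<le> vnorm y"
      by (rule vnorm_proj_fixed_space_le[OF A y])
    show "vnorm (?P y) \<le> d * vnorm (?P x) + l * vnorm (x - ?P x)"
      unfolding y_def by (rule vnorm_proj_unitary_hermitian_le[OF A U l(1) spec shrink x])
    show "(vnorm (A *\<^sub>v y))\<^sup>2 \<le> (vnorm (?P y))\<^sup>2 + l\<^sup>2 * ((vnorm y)\<^sup>2 - (vnorm (?P y))\<^sup>2)"
      by (rule vnorm_power2_hermitian_le[OF A l(1) spec y])
  qed simp_all
  then have "vnorm (A *\<^sub>v y) \<le> sqrt (1 - (1 - l\<^sup>2) * (1 - d)\<^sup>2 / 4) * vnorm x"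
    by (metis real_le_rsqrt real_sqrt_mult real_sqrt_abs abs_of_nonneg vnorm_nonneg)
  ultimately show ?thesis
    using l d by (simp add: shrinkage_factor_def)
qed

lemma opnorm_le:
  assumes M: "M \<in> carrier_mat n m" and c: "0 \<le> c"
    and bound: "\<And>x. x \<in> carrier_vec m \<Longrightarrow> vnorm (M *\<^sub>v x) \<le> c * vnorm x"
  shows "opnorm M \<le> c"
  unfolding opnorm_def
proof (rule cSup_least)
  show "{vnorm (M *\<^sub>v v) |v. v \<in> carrier_vec (dim_col M) \<and> vnorm v \<le> 1} \<noteq> {}"
    using M by (auto intro!: exI[of _ "0\<^sub>v m"])
next
  fix s assume "s \<in> {vnorm (M *\<^sub>v v) |v. v \<in> carrier_vec (dim_col M) \<and> vnorm v \<le> 1}"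
  then obtain v where v: "v \<in> carrier_vec m" "vnorm v \<le> 1" and s: "s = vnorm (M *\<^sub>v v)"
    using M by auto
  have "s \<le> c * vnorm v"
    using bound[OF v(1)] s by simp
  also have "\<dots> \<le> c"
    using v(2) c mult_left_mono[of "vnorm v" 1 c] by simp
  finally show "s \<le> c" .
qed

theorem shrinkage_const_shrinkage_factor: "shrinkage_const shrinkage_factor"
  unfolding shrinkage_const_def
proof (intro allI impI, elim conjE)
  fix l d N and A U :: "complex mat"
  assume l: "0 \<le> l" "l < 1" and d: "0 \<le> d" "d < 1" and A: "hermitian_mat N A" and U: "unitary_mat N U"
    and spec: "\<forall>\<nu>\<in>spectrum A. \<nu> \<noteq> 1 \<longrightarrow> cmod \<nu> \<le> l"
    and shrink: "\<forall>v\<in>fixed_space N A. vnorm (proj (fixed_space N A) (U *\<^sub>v v)) \<le> d * vnorm v"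
  have "U * A \<in> carrier_mat N N"
    using hermitian_mat_carrier[OF A] unitary_mat_carrier[OF U] by simp
  then have "(U * A) ^\<^sub>m 2 \<in> carrier_mat N N"
    by simp
  then show "opnorm ((U * A) ^\<^sub>m 2) \<le> shrinkage_factor l d"
    by (rule opnorm_le[OF _ shrinkage_factor_bounds(1) vnorm_square_shrinkage[OF A U l d spec shrink]])
qed

lemma vnorm_mat_pow_le:
  assumes M: "M \<in> carrier_mat N N" and G: "0 \<le> G"
    and bound1: "\<And>x. x \<in> carrier_vec N \<Longrightarrow> vnorm (M *\<^sub>v x) \<le> vnorm x"
    and bound2: "\<And>x. x \<in> carrier_vec N \<Longrightarrow> vnorm (M ^\<^sub>m 2 *\<^sub>v x) \<le> G * vnorm x"
    and x: "x \<in> carrier_vec N"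
  shows "vnorm (M ^\<^sub>m j *\<^sub>v x) \<le> G ^ (j div 2) * vnorm x"
  using x
proof (induction j arbitrary: x rule: nat_induct2)
  case 0
  then show ?case
    using carrier_matD(1)[OF M] by simp
next
  case 1
  then show ?case using M bound1 by simp
next
  case (step j)
  have Mj: "M ^\<^sub>m j \<in> carrier_mat N N" and Mx: "M *\<^sub>v x \<in> carrier_vec N"
    using M step.prems by auto
  have "M ^\<^sub>m 2 *\<^sub>v x = M *\<^sub>v (M *\<^sub>v x)"
    using M step.prems by (simp add: numeral_2_eq_2 assoc_mult_mat_vec[OF M M])
  moreover have "M ^\<^sub>m (j + 2) *\<^sub>v x = M ^\<^sub>m j *\<^sub>v (M *\<^sub>v (M *\<^sub>v x))"
    using assoc_mult_mat_vec[OF mult_carrier_mat[OF Mj M] M step.prems] assoc_mult_mat_vec[OF Mj M Mx]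
    by (simp add: numeral_2_eq_2)
  ultimately have "M ^\<^sub>m (j + 2) *\<^sub>v x = M ^\<^sub>m j *\<^sub>v (M ^\<^sub>m 2 *\<^sub>v x)"
    by simp
  also have "vnorm \<dots> \<le> G ^ (j div 2) * vnorm (M ^\<^sub>m 2 *\<^sub>v x)"
    using mult_mat_vec_carrier[OF pow_carrier_mat[OF M] step.prems] by (rule step.IH)
  also have "\<dots> \<le> G ^ (j div 2) * (G * vnorm x)"
    using bound2[OF step.prems] G by (intro mult_left_mono) simp_all
  finally show ?case
    by (simp add: mult_ac)
qed

lemma block_index_less:
  assumes "a < n" "r < k"
  shows "a * k + r < n * (k :: nat)"
proof -
  have "a * k + r < Suc a * k"
    using assms(2) by simp
  also have "\<dots> \<le> n * k"
    using assms(1) by (intro mult_right_mono) auto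
  finally show ?thesis .
qed

lemma block_index_cases:
  assumes "i < n * (k :: nat)"
  obtains a r where "a < n" "r < k" "i = a * k + r"
proof
  have "0 < k"
    using assms by (cases k) auto
  then show "i div k < n" "i mod k < k"
    using assms by (auto simp: less_mult_imp_div_less)
  show "i = i div k * k + i mod k"
    by simp
qed

lemma block_index_eq_iff:
  assumes "r < k" "s < (k :: nat)"
  shows "a * k + r = b * k + s \<longleftrightarrow> a = b \<and> r = s"
proof
  assume eq: "a * k + r = b * k + s"
  have "(a * k + r) div k = a" "(b * k + s) div k = b" "(a * k + r) mod k = r" "(b * k + s) mod k = s"
    using assms by auto
  then show "a = b \<and> r = s"
    using eq by metis
qed auto

lemma sum_lessThan_mult_blocks:
  fixes g :: "nat \<Rightarrow> 'a :: comm_monoid_add"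
  shows "(\<Sum>j<n * k. g j) = (\<Sum>a<n. \<Sum>r<k. g (a * k + r))"
proof -
  have "(\<Sum>j<n * k. g j) = (\<Sum>a<n. sum g {a * k..<a * k + k})"
    using sum.nat_group[of g k n] by simp
  also have "\<dots> = (\<Sum>a<n. \<Sum>r<k. g (a * k + r))"
  proof (rule sum.cong[OF refl])
    fix a
    show "sum g {a * k..<a * k + k} = (\<Sum>r<k. g (a * k + r))"
      using sum.shift_bounds_nat_ivl[of g 0 "a * k" k] by (simp add: atLeast0LessThan add.commute)
  qed
  finally show ?thesis .
qed

lemma eq_vec_blocksI:
  assumes "x \<in> carrier_vec (n * k)" "y \<in> carrier_vec (n * k)"
    and "\<And>a r. a < n \<Longrightarrow> r < k \<Longrightarrow> x $ (a * k + r) = y $ (a * k + r)"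
  shows "x = y"
proof (rule eq_vecI)
  fix i assume "i < dim_vec y"
  then obtain a r where "a < n" "r < k" "i = a * k + r"
    using assms(2) block_index_cases[of i n k] by auto
  then show "x $ i = y $ i"
    using assms(3) by simp
qed (use assms in simp)

lemma diag_block_mat_uniform:
  assumes "\<forall>B\<in>set Bs. B \<in> carrier_mat k k"
  shows "diag_block_mat Bs \<in> carrier_mat (length Bs * k) (length Bs * k)"
    and "a < length Bs \<Longrightarrow> b < length Bs \<Longrightarrow> r < k \<Longrightarrow> s < k \<Longrightarrow>
      diag_block_mat Bs $$ (a * k + r, b * k + s) = (if a = b then (Bs ! a) $$ (r, s) else 0)"
proof -
  have "sum_list (map dim_row Bs) = length Bs * k" "sum_list (map dim_col Bs) = length Bs * k"
    using assms by (induction Bs) auto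
  then show carrier: "diag_block_mat Bs \<in> carrier_mat (length Bs * k) (length Bs * k)"
    by (intro carrier_matI) (simp_all add: dim_diag_block_mat)
  show "a < length Bs \<Longrightarrow> b < length Bs \<Longrightarrow> r < k \<Longrightarrow> s < k \<Longrightarrow>
      diag_block_mat Bs $$ (a * k + r, b * k + s) = (if a = b then (Bs ! a) $$ (r, s) else 0)"
    using assms carrier
  proof (induction Bs arbitrary: a b)
    case (Cons B Bs)
    have B: "B \<in> carrier_mat k k" and D: "diag_block_mat Bs \<in> carrier_mat (length Bs * k) (length Bs * k)"
      using Cons.prems(5,6) by (auto intro!: carrier_matI simp: dim_diag_block_mat)
    have idx: "diag_block_mat (B # Bs) $$ (i, j) =
      (if i < k then if j < k then B $$ (i, j) else 0
       else if j < k then 0 else diag_block_mat Bs $$ (i - k, j - k))"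
      if "i < k + length Bs * k" "j < k + length Bs * k" for i j
      using B D that by (simp add: Let_def carrier_matD)
    have ab: "a * k + r < k + length Bs * k" "b * k + s < k + length Bs * k"
      using block_index_less[of a "length (B # Bs)" r k] block_index_less[of b "length (B # Bs)" s k] Cons.prems
      by auto
    show ?case
    proof (cases a; cases b)
      fix a' b' assume "a = Suc a'" "b = Suc b'"
      then show ?thesis
        using idx[OF ab] Cons.IH[of a' b'] Cons.prems D by (simp add: add.assoc)
    qed (use idx[OF ab] Cons.prems in auto)
  qed simp
qed

lemma unitary_mat_diag_block:
  assumes Bs: "\<forall>B\<in>set Bs. unitary_mat k B"
  shows "unitary_mat (length Bs * k) (diag_block_mat Bs)"
proof -
  let ?n = "length Bs" and ?D = "diag_block_mat Bs"
  have Bsc: "\<forall>B\<in>set Bs. B \<in> carrier_mat k k"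
    using Bs unitary_mat_carrier by blast
  note D = diag_block_mat_uniform[OF Bsc]
  show ?thesis
  proof (rule unitary_matI_orthonormal_cols[OF D(1)])
    fix i j assume "i < ?n * k" "j < ?n * k"
    then obtain a r b s where ar: "a < ?n" "r < k" "i = a * k + r" and bs: "b < ?n" "s < k" "j = b * k + s"
      using block_index_cases by metis
    have "(\<Sum>t<?n * k. cnj (?D $$ (t, i)) * ?D $$ (t, j)) =
        (\<Sum>c<?n. \<Sum>q<k. cnj (?D $$ (c * k + q, i)) * ?D $$ (c * k + q, j))"
      by (rule sum_lessThan_mult_blocks)
    also have "\<dots> = (\<Sum>c<?n. if c = a \<and> c = b then \<Sum>q<k. cnj (Bs ! a $$ (q, r)) * Bs ! a $$ (q, s) else 0)"
      using ar bs by (intro sum.cong refl) (auto simp: D(2) intro!: sum.neutral)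
    also have "\<dots> = (if a = b then \<Sum>q<k. cnj (Bs ! a $$ (q, r)) * Bs ! a $$ (q, s) else 0)"
      using ar by (cases "a = b") (auto simp: sum.delta intro!: sum.neutral)
    also have "\<dots> = (if i = j then 1 else 0)"
      using unitary_mat_orthonormal_cols[of k "Bs ! a" r s] Bs ar bs by (auto simp: block_index_eq_iff)
    finally show "(\<Sum>t<?n * k. cnj (?D $$ (t, i)) * ?D $$ (t, j)) = (if i = j then 1 else 0)" .
  qed
qed

definition vec_block :: "nat \<Rightarrow> 'a vec \<Rightarrow> nat \<Rightarrow> 'a vec" where
  "vec_block k v a = vec k (\<lambda>r. v $ (a * k + r))"

definition vec_slice :: "nat \<Rightarrow> 'a vec \<Rightarrow> nat \<Rightarrow> 'a vec" where
  "vec_slice k v r = vec (dim_vec v div k) (\<lambda>b. v $ (b * k + r))"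

definition vec_tensor :: "complex vec \<Rightarrow> complex vec \<Rightarrow> complex vec" where
  "vec_tensor x w = vec (dim_vec x * dim_vec w) (\<lambda>i. x $ (i div dim_vec w) * w $ (i mod dim_vec w))"

lemma dim_vec_tensor [simp]: "dim_vec (vec_tensor x w) = dim_vec x * dim_vec w"
  by (simp add: vec_tensor_def)

lemma dim_vec_slice [simp]: "dim_vec (vec_slice k v r) = dim_vec v div k"
  by (simp add: vec_slice_def)

lemma vec_slice_index [simp]: "b < dim_vec v div k \<Longrightarrow> vec_slice k v r $ b = v $ (b * k + r)"
  by (simp add: vec_slice_def)

lemma vec_slice_carrier: "v \<in> carrier_vec (n * k) \<Longrightarrow> 0 < k \<Longrightarrow> vec_slice k v r \<in> carrier_vec n"
  by (simp add: vec_slice_def)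

lemma vec_tensor_carrier: "x \<in> carrier_vec n \<Longrightarrow> w \<in> carrier_vec k \<Longrightarrow> vec_tensor x w \<in> carrier_vec (n * k)"
  by (simp add: vec_tensor_def)

lemma vec_tensor_index:
  "w \<in> carrier_vec k \<Longrightarrow> a < dim_vec x \<Longrightarrow> r < k \<Longrightarrow> vec_tensor x w $ (a * k + r) = x $ a * w $ r"
  by (simp add: vec_tensor_def block_index_less)

lemma vnorm_vec_tensor:
  assumes x: "x \<in> carrier_vec n" and w: "w \<in> carrier_vec k"
  shows "vnorm (vec_tensor x w) = vnorm x * vnorm w"
proof -
  have "(vnorm (vec_tensor x w))\<^sup>2 = (\<Sum>a<n. \<Sum>r<k. (cmod (vec_tensor x w $ (a * k + r)))\<^sup>2)"
    using carrier_vecD[OF x] carrier_vecD[OF w] by (simp add: vnorm_power2 sum_lessThan_mult_blocks)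
  also have "\<dots> = (\<Sum>a<n. (cmod (x $ a))\<^sup>2) * (\<Sum>r<k. (cmod (w $ r))\<^sup>2)"
    using x w by (simp add: vec_tensor_index norm_mult power_mult_distrib sum_product)
  also have "\<dots> = (vnorm x * vnorm w)\<^sup>2"
    using x w by (simp add: vnorm_power2 power_mult_distrib)
  finally show ?thesis
    by (simp add: power2_eq_iff_nonneg)
qed

lemma diag_block_mult_vec_index:
  assumes Bs: "\<forall>B\<in>set Bs. B \<in> carrier_mat k k" and v: "v \<in> carrier_vec (length Bs * k)"
    and a: "a < length Bs" and r: "r < k"
  shows "(diag_block_mat Bs *\<^sub>v v) $ (a * k + r) = (Bs ! a *\<^sub>v vec_block k v a) $ r"
proof -
  note D = diag_block_mat_uniform[OF Bs]
  have "(diag_block_mat Bs *\<^sub>v v) $ (a * k + r) =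
      (\<Sum>b<length Bs. \<Sum>s<k. diag_block_mat Bs $$ (a * k + r, b * k + s) * v $ (b * k + s))"
    using D(1) v block_index_less[OF a r]
    by (simp add: scalar_prod_def atLeast0LessThan sum_lessThan_mult_blocks)
  also have "\<dots> = (\<Sum>b<length Bs. if b = a then \<Sum>s<k. Bs ! a $$ (r, s) * v $ (a * k + s) else 0)"
    using a r by (intro sum.cong refl) (auto simp: D(2) intro!: sum.neutral)
  also have "\<dots> = (Bs ! a *\<^sub>v vec_block k v a) $ r"
  proof -
    have "Bs ! a \<in> carrier_mat k k"
      using Bs nth_mem[OF a] by blast
    then show ?thesis
      using a r by (simp add: vec_block_def scalar_prod_def atLeast0LessThan)
  qed
  finally show ?thesis .
qed

lemma kron_one_mat_carrier: "M \<in> carrier_mat n m \<Longrightarrow> kron M (1\<^sub>m k) \<in> carrier_mat (n * k) (m * k)"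
  by (intro carrier_matI) (simp_all add: kron_def carrier_matD)

lemma kron_one_mat_index:
  assumes "M \<in> carrier_mat n m" "a < n" "b < m" "r < k" "s < k"
  shows "kron M (1\<^sub>m k) $$ (a * k + r, b * k + s) = (if r = s then M $$ (a, b) else 0)"
  using assms block_index_less[of a n r k] block_index_less[of b m s k] by (simp add: kron_def carrier_matD)

lemma kron_one_mult_vec_index:
  assumes M: "M \<in> carrier_mat n m" and v: "v \<in> carrier_vec (m * k)" and a: "a < n" and r: "r < k"
  shows "(kron M (1\<^sub>m k) *\<^sub>v v) $ (a * k + r) = (M *\<^sub>v vec_slice k v r) $ a"
proof -
  have "(kron M (1\<^sub>m k) *\<^sub>v v) $ (a * k + r) =
      (\<Sum>b<m. \<Sum>s<k. kron M (1\<^sub>m k) $$ (a * k + r, b * k + s) * v $ (b * k + s))"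
    using kron_one_mat_carrier[OF M, of k] v block_index_less[OF a r]
    by (simp add: scalar_prod_def atLeast0LessThan sum_lessThan_mult_blocks)
  also have "\<dots> = (\<Sum>b<m. \<Sum>s<k. if s = r then M $$ (a, b) * v $ (b * k + s) else 0)"
    using M a r by (intro sum.cong refl) (auto simp: kron_one_mat_index)
  also have "\<dots> = (\<Sum>b<m. M $$ (a, b) * v $ (b * k + r))"
    using r by simp
  also have "\<dots> = (M *\<^sub>v vec_slice k v r) $ a"
    using M v a r by (simp add: vec_slice_def scalar_prod_def atLeast0LessThan)
  finally show ?thesis .
qed

section \<open>Perron eigenvectors and weighted means\<close>

lemma adj_mat_carrier [simp]: "adj_mat n E \<in> carrier_mat n n"
  by (simp add: adj_mat_def)

lemma adj_mat_dim: "dim_row (adj_mat n E) = n" "dim_col (adj_mat n E) = n"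
  by (simp_all add: adj_mat_def)

lemma adj_mat_index [simp]: "a < n \<Longrightarrow> b < n \<Longrightarrow> adj_mat n E $$ (a, b) = (if E a b then 1 else 0)"
  by (simp add: adj_mat_def)

lemma adj_mat_mult_vec_index:
  "y \<in> carrier_vec n \<Longrightarrow> a < n \<Longrightarrow> (adj_mat n E *\<^sub>v y) $ a = (\<Sum>b<n. adj_mat n E $$ (a, b) * y $ b)"
  by (simp add: adj_mat_def scalar_prod_def atLeast0LessThan)

lemma nonneg_eigenfunction_zero_spreads:
  fixes Z :: "nat \<Rightarrow> real"
  assumes conn: "graph_connected n E"
    and Z: "\<And>a. a < n \<Longrightarrow> 0 \<le> Z a" "\<And>a. a < n \<Longrightarrow> (\<Sum>b<n. adj_mat n E $$ (a, b) * Z b) = lam * Z a"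
    and a0: "a0 < n" "Z a0 = 0" and b: "b < n"
  shows "Z b = 0"
proof -
  have spread: "Z b = 0" if "a < n" "b < n" "E a b" "Z a = 0" for a b
  proof -
    have "(\<Sum>b<n. adj_mat n E $$ (a, b) * Z b) = 0"
      using Z(2)[OF that(1)] that(4) by simp
    moreover have "\<forall>b'\<in>{..<n}. 0 \<le> adj_mat n E $$ (a, b') * Z b'"
      using that(1) by (simp add: Z(1))
    ultimately have "\<forall>b'\<in>{..<n}. adj_mat n E $$ (a, b') * Z b' = 0"
      using sum_nonneg_eq_0_iff[of "{..<n}" "\<lambda>b'. adj_mat n E $$ (a, b') * Z b'"] by blast
    then have "adj_mat n E $$ (a, b) * Z b = 0"
      using that(2) by blast
    then show ?thesis
      using that(1-3) by simp
  qed
  have "(a0, b) \<in> {(x, y). x < n \<and> y < n \<and> E x y}\<^sup>*"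
    using conn a0(1) b by (simp add: graph_connected_def)
  then show ?thesis
  proof (induction rule: rtrancl_induct)
    case base
    then show ?case using a0(2) .
  next
    case (step x z)
    then show ?case
      using spread by blast
  qed
qed

text \<open>
  Subtracting from a real eigenvector y the largest multiple c X with c X \<le> y componentwise leaves a
  nonnegative eigenvector with a zero, which vanishes identically by the previous lemma.
\<close>

lemma perron_eigenvector_unique_real:
  fixes X y :: "real vec"
  assumes conn: "graph_connected n E"
    and X: "X \<in> carrier_vec n" "\<forall>m<n. 0 < X $ m" "adj_mat n E *\<^sub>v X = lam \<cdot>\<^sub>v X"
    and y: "y \<in> carrier_vec n" "adj_mat n E *\<^sub>v y = lam \<cdot>\<^sub>v y"
  shows "\<exists>c. \<forall>a<n. y $ a = c * X $ a"
proof -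
  have "0 < n"
    using conn by (simp add: graph_connected_def)
  define c where "c = Min ((\<lambda>a. y $ a / X $ a) ` {..<n})"
  have "c \<in> (\<lambda>a. y $ a / X $ a) ` {..<n}"
    unfolding c_def using \<open>0 < n\<close> by (intro Min_in) auto
  then obtain a0 where a0: "a0 < n" and c_a0: "c = y $ a0 / X $ a0"
    by auto
  define Z where "Z a = y $ a - c * X $ a" for a
  have Z_nonneg: "0 \<le> Z a" if "a < n" for a
  proof -
    have "c \<le> y $ a / X $ a"
      unfolding c_def using that by (intro Min_le) auto
    then show ?thesis
      using X(2) that by (simp add: Z_def pos_le_divide_eq)
  qed
  have Z_eigen: "(\<Sum>b<n. adj_mat n E $$ (a, b) * Z b) = lam * Z a" if a: "a < n" for a
  proof -
    have "(\<Sum>b<n. adj_mat n E $$ (a, b) * Z b) =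
        (adj_mat n E *\<^sub>v y) $ a - c * (adj_mat n E *\<^sub>v X) $ a"
      using X(1) y(1) a
      by (simp add: Z_def adj_mat_mult_vec_index algebra_simps sum_subtractf sum_distrib_left)
    then show ?thesis
      using X(1,3) y a by (simp add: Z_def algebra_simps)
  qed
  have "Z a0 = 0"
    using X(2)[rule_format, OF a0] c_a0 by (simp add: Z_def)
  then have "\<forall>b<n. y $ b = c * X $ b"
    using nonneg_eigenfunction_zero_spreads[OF conn Z_nonneg Z_eigen a0] by (simp add: Z_def)
  then show ?thesis by blast
qed

lemma perron_eigenvector_unique:
  fixes X :: "real vec" and s :: "complex vec"
  assumes conn: "graph_connected n E"
    and X: "X \<in> carrier_vec n" "\<forall>m<n. 0 < X $ m" "adj_mat n E *\<^sub>v X = lam \<cdot>\<^sub>v X"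
    and s: "s \<in> carrier_vec n" "map_mat complex_of_real (adj_mat n E) *\<^sub>v s = complex_of_real lam \<cdot>\<^sub>v s"
  shows "\<exists>c. \<forall>a<n. s $ a = c * complex_of_real (X $ a)"
proof -
  have s_eigen: "(\<Sum>b<n. complex_of_real (adj_mat n E $$ (a, b)) * s $ b) = complex_of_real lam * s $ a"
    if "a < n" for a
  proof -
    have "(map_mat complex_of_real (adj_mat n E) *\<^sub>v s) $ a =
        (\<Sum>b<n. complex_of_real (adj_mat n E $$ (a, b)) * s $ b)"
      using s(1) that by (simp add: adj_mat_def scalar_prod_def atLeast0LessThan)
    then show ?thesis
      using s that by simp
  qed
  have part: "\<exists>c. \<forall>a<n. h (s $ a) = c * X $ a"
    if h: "\<And>z w. h (z + w) = h z + h w" "\<And>x z. h (complex_of_real x * z) = x * h z" for h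
  proof -
    have "h (\<Sum>b\<in>B. complex_of_real (adj_mat n E $$ (a, b)) * s $ b) =
        (\<Sum>b\<in>B. adj_mat n E $$ (a, b) * h (s $ b))" if "finite B" for a B
      using that by (induction B rule: finite_induct) (auto simp: h(1) h(2) h(2)[of 0 0, simplified])
    note h_sum = this
    have "adj_mat n E *\<^sub>v vec n (\<lambda>a. h (s $ a)) = lam \<cdot>\<^sub>v vec n (\<lambda>a. h (s $ a))"
    proof (rule eq_vecI)
      fix a assume "a < dim_vec (lam \<cdot>\<^sub>v vec n (\<lambda>a. h (s $ a)))"
      then have a: "a < n" by simp
      have "(adj_mat n E *\<^sub>v vec n (\<lambda>a. h (s $ a))) $ a = (\<Sum>b<n. adj_mat n E $$ (a, b) * h (s $ b))"
        using adj_mat_mult_vec_index[OF vec_carrier a] by simp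
      also have "\<dots> = h (complex_of_real lam * s $ a)"
        using h_sum[of "{..<n}" a] s_eigen[OF a] by simp
      finally show "(adj_mat n E *\<^sub>v vec n (\<lambda>a. h (s $ a))) $ a = (lam \<cdot>\<^sub>v vec n (\<lambda>a. h (s $ a))) $ a"
        using a h(2) by simp
    qed (simp add: adj_mat_def)
    from perron_eigenvector_unique_real[OF conn X vec_carrier this]
    show ?thesis by auto
  qed
  obtain cR where cR: "\<forall>a<n. Re (s $ a) = cR * X $ a"
    using part[of Re] by auto
  obtain cI where cI: "\<forall>a<n. Im (s $ a) = cI * X $ a"
    using part[of Im] by auto
  have "\<forall>a<n. s $ a = Complex cR cI * complex_of_real (X $ a)"
    using cR cI by (simp add: complex_eq_iff)
  then show ?thesis by blast
qed

lemma weighted_mean_variance: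
  fixes p :: "nat \<Rightarrow> real" and u :: "nat \<Rightarrow> complex vec"
  assumes u: "\<And>a. a < n \<Longrightarrow> u a \<in> carrier_vec k" "\<And>a. a < n \<Longrightarrow> vnorm (u a) = r"
    and p: "(\<Sum>a<n. p a) = 1"
  defines "c \<equiv> vec k (\<lambda>i. \<Sum>a<n. complex_of_real (p a) * u a $ i)"
  shows "(vnorm c)\<^sup>2 + (\<Sum>a<n. p a * (vnorm (u a - c))\<^sup>2) = r\<^sup>2"
proof -
  have c: "c \<in> carrier_vec k"
    by (simp add: c_def)
  have "(\<Sum>a<n. complex_of_real (p a) * cinner (u a) c) =
      (\<Sum>a<n. \<Sum>i<k. complex_of_real (p a) * u a $ i * cnj (c $ i))"
    using u(1) by (intro sum.cong refl) (simp add: cinner_def sum_distrib_left mult.assoc carrier_vecD[OF u(1)])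
  also have "\<dots> = (\<Sum>i<k. \<Sum>a<n. complex_of_real (p a) * u a $ i * cnj (c $ i))"
    by (rule sum.swap)
  also have "\<dots> = cinner c c"
    by (simp add: cinner_def c_def sum_distrib_right)
  finally have "Re (\<Sum>a<n. complex_of_real (p a) * cinner (u a) c) = (vnorm c)\<^sup>2"
    by (simp add: cinner_self)
  then have mean: "(\<Sum>a<n. p a * Re (cinner (u a) c)) = (vnorm c)\<^sup>2"
    by (simp add: Re_sum)
  have "(\<Sum>a<n. p a * (vnorm (u a - c))\<^sup>2) =
      (\<Sum>a<n. p a * (r\<^sup>2 + (vnorm c)\<^sup>2) - 2 * (p a * Re (cinner (u a) c)))"
    by (intro sum.cong refl) (simp add: vnorm_diff_power2[OF u(1) c] u(2) algebra_simps)
  also have "\<dots> = r\<^sup>2 - (vnorm c)\<^sup>2"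
    using p mean by (simp add: sum_subtractf sum_distrib_left[symmetric] sum_distrib_right[symmetric])
  finally show ?thesis by simp
qed

text \<open>
  A separated pair of the u a keeps their weighted variance away from zero, which by the
  variance identity shortens the mean.
\<close>

lemma vnorm_power2_weighted_mean_le:
  fixes p :: "nat \<Rightarrow> real" and u :: "nat \<Rightarrow> complex vec"
  assumes u: "\<And>a. a < n \<Longrightarrow> u a \<in> carrier_vec k" "\<And>a. a < n \<Longrightarrow> vnorm (u a) = r"
    and p: "(\<Sum>a<n. p a) = 1" "\<And>a. a < n \<Longrightarrow> q \<le> p a" "0 \<le> q"
    and ab: "a < n" "b < n" "a \<noteq> b" and sep: "\<kappa> * r \<le> vnorm (u b - u a)" "0 \<le> \<kappa>"
  defines "c \<equiv> vec k (\<lambda>i. \<Sum>a<n. complex_of_real (p a) * u a $ i)"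
  shows "(vnorm c)\<^sup>2 \<le> (1 - q * \<kappa>\<^sup>2 / 2) * r\<^sup>2"
proof -
  have c: "c \<in> carrier_vec k"
    by (simp add: c_def)
  have "0 \<le> r"
    using u(2)[OF ab(1)] vnorm_nonneg by metis
  then have "(\<kappa> * r)\<^sup>2 \<le> (vnorm (u b - c) + vnorm (u a - c))\<^sup>2"
    using sep vnorm_diff_triangle[OF u(1)[OF ab(2)] c u(1)[OF ab(1)]] vnorm_diff_commute[OF c u(1)[OF ab(1)]]
    by (intro power_mono) auto
  also have "\<dots> \<le> 2 * ((vnorm (u a - c))\<^sup>2 + (vnorm (u b - c))\<^sup>2)"
    using sum_squares_bound[of "vnorm (u b - c)" "vnorm (u a - c)"] by (simp add: power2_eq_square algebra_simps)
  finally have "q * (\<kappa> * r)\<^sup>2 \<le> q * (2 * ((vnorm (u a - c))\<^sup>2 + (vnorm (u b - c))\<^sup>2))"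
    using p(3) by (rule mult_left_mono)
  then have spread: "q * (\<kappa>\<^sup>2 * r\<^sup>2) \<le> 2 * (q * ((vnorm (u a - c))\<^sup>2 + (vnorm (u b - c))\<^sup>2))"
    by (simp add: power_mult_distrib algebra_simps)
  have "q * ((vnorm (u a - c))\<^sup>2 + (vnorm (u b - c))\<^sup>2) \<le> (\<Sum>x\<in>{a, b}. p x * (vnorm (u x - c))\<^sup>2)"
    using ab p(2) by (simp add: distrib_left add_mono mult_right_mono)
  also have "\<dots> \<le> (\<Sum>x<n. p x * (vnorm (u x - c))\<^sup>2)"
    using ab by (intro sum_mono2) (auto intro!: mult_nonneg_nonneg order_trans[OF p(3) p(2)])
  finally have "q * (\<kappa>\<^sup>2 * r\<^sup>2) \<le> 2 * (\<Sum>x<n. p x * (vnorm (u x - c))\<^sup>2)"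
    using spread by linarith
  moreover have "(vnorm c)\<^sup>2 + (\<Sum>x<n. p x * (vnorm (u x - c))\<^sup>2) = r\<^sup>2"
    unfolding c_def by (rule weighted_mean_variance[OF u p(1)])
  moreover have "(1 - q * \<kappa>\<^sup>2 / 2) * r\<^sup>2 = r\<^sup>2 - q * (\<kappa>\<^sup>2 * r\<^sup>2) / 2"
    by (simp add: algebra_simps)
  ultimately show ?thesis
    by linarith
qed

lemma vnorm_weighted_mean_le:
  fixes p :: "nat \<Rightarrow> real" and u :: "nat \<Rightarrow> complex vec"
  assumes u: "\<And>a. a < n \<Longrightarrow> u a \<in> carrier_vec k" "\<And>a. a < n \<Longrightarrow> vnorm (u a) = r"
    and p: "(\<Sum>a<n. p a) = 1" "\<And>a. a < n \<Longrightarrow> q \<le> p a" "0 \<le> q"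
    and ab: "a < n" "b < n" "a \<noteq> b" and sep: "\<kappa> * r \<le> vnorm (u b - u a)" "0 \<le> \<kappa>"
  defines "c \<equiv> vec k (\<lambda>i. \<Sum>a<n. complex_of_real (p a) * u a $ i)"
  shows "vnorm c \<le> (1 - q * \<kappa>\<^sup>2 / 8) * r"
proof -
  define t where "t = q * \<kappa>\<^sup>2 / 2"
  have c2: "(vnorm c)\<^sup>2 \<le> (1 - t) * r\<^sup>2"
    unfolding c_def t_def by (rule vnorm_power2_weighted_mean_le[OF u p ab sep])
  have r: "0 \<le> r"
    using u(2)[OF ab(1)] vnorm_nonneg by metis
  have t: "0 \<le> t"
    using p(3) by (simp add: t_def)
  have "vnorm c \<le> (1 - t / 2) * r"
  proof (cases "r = 0")
    case True
    then show ?thesis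
      using c2 by simp
  next
    case False
    have "t \<le> 1"
    proof (rule ccontr)
      assume "\<not> t \<le> 1"
      then have "(1 - t) * r\<^sup>2 < 0"
        using False by (simp add: mult_neg_pos)
      then show False
        using c2 zero_le_power2[of "vnorm c"] by linarith
    qed
    have "((1 - t / 2) * r)\<^sup>2 = (1 - t) * r\<^sup>2 + (t * r / 2)\<^sup>2"
      by (simp add: power2_eq_square algebra_simps)
    then have "(1 - t) * r\<^sup>2 \<le> ((1 - t / 2) * r)\<^sup>2"
      by simp
    then have "(vnorm c)\<^sup>2 \<le> ((1 - t / 2) * r)\<^sup>2"
      using c2 by linarith
    then show ?thesis
      by (rule power2_le_imp_le) (use \<open>t \<le> 1\<close> r in simp)
  qed
  also have "\<dots> \<le> (1 - q * \<kappa>\<^sup>2 / 8) * r"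
    using r t by (intro mult_right_mono) (simp_all add: t_def)
  finally show ?thesis .
qed

section \<open>The twisted walk operator\<close>

locale twisted_walk =
  fixes n :: nat and E :: "nat \<Rightarrow> nat \<Rightarrow> bool" and lam1 :: real and X :: "real vec"
    and k :: nat and f :: "nat \<Rightarrow> complex mat"
  assumes simple: "simple_graph n E" and connected: "graph_connected n E" and lam1_pos: "0 < lam1"
    and perron: "eigenvector (adj_mat n E) X lam1" and X_pos: "\<forall>m<n. 0 < X $ m"
    and X_unit: "(\<Sum>m<n. (X $ m)\<^sup>2) = 1"
    and k_pos: "0 < k" and f_unitary: "\<And>m. m < n \<Longrightarrow> unitary_mat k (f m)"
begin

abbreviation "Adj \<equiv> map_mat complex_of_real (adj_mat n E)"
abbreviation "XC \<equiv> map_vec complex_of_real X"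
abbreviation "U \<equiv> diag_block_mat (map f [0..<n])"
abbreviation "A \<equiv> complex_of_real (1 / lam1) \<cdot>\<^sub>m kron Adj (1\<^sub>m k)"

lemma X_carrier: "X \<in> carrier_vec n" and perron_eq: "adj_mat n E *\<^sub>v X = lam1 \<cdot>\<^sub>v X"
  using perron by (auto simp: eigenvector_def adj_mat_def)

lemma XC_carrier: "XC \<in> carrier_vec n"
  using X_carrier by simp

lemma vnorm_XC: "vnorm XC = 1"
  using X_carrier X_unit by (simp add: vnorm_def)

lemma Adj_carrier: "Adj \<in> carrier_mat n n"
  by simp

lemma Adj_mult_XC: "Adj *\<^sub>v XC = complex_of_real lam1 \<cdot>\<^sub>v XC"
  using of_real_hom.mult_mat_vec_hom[OF adj_mat_carrier[of n E] X_carrier] perron_eq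
  by (metis of_real_hom.vec_hom_smult)

lemma f_carrier: "m < n \<Longrightarrow> f m \<in> carrier_mat k k"
  using f_unitary unitary_mat_carrier by blast

lemma U_unitary: "unitary_mat (n * k) U"
  using unitary_mat_diag_block[of "map f [0..<n]" k] f_unitary by simp

lemma U_carrier: "U \<in> carrier_mat (n * k) (n * k)"
  using U_unitary by (rule unitary_mat_carrier)

lemma U_mult_vec_index:
  "v \<in> carrier_vec (n * k) \<Longrightarrow> a < n \<Longrightarrow> r < k \<Longrightarrow> (U *\<^sub>v v) $ (a * k + r) = (f a *\<^sub>v vec_block k v a) $ r"
  using diag_block_mult_vec_index[of "map f [0..<n]" k v a r] f_carrier by simp

lemma A_carrier: "A \<in> carrier_mat (n * k) (n * k)"
  using kron_one_mat_carrier[OF Adj_carrier, of k] by simp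

lemma A_mult_vec_index:
  assumes "v \<in> carrier_vec (n * k)" "a < n" "r < k"
  shows "(A *\<^sub>v v) $ (a * k + r) = complex_of_real (1 / lam1) * (Adj *\<^sub>v vec_slice k v r) $ a"
  using kron_one_mult_vec_index[OF Adj_carrier assms] kron_one_mat_carrier[OF Adj_carrier, of k] assms
    block_index_less[of a n r k] by simp

lemma A_hermitian: "hermitian_mat (n * k) A"
proof (rule hermitian_matI[OF A_carrier])
  fix i j assume "i < n * k" "j < n * k"
  then obtain a r b s where "a < n" "r < k" "i = a * k + r" "b < n" "s < k" "j = b * k + s"
    using block_index_cases by metis
  moreover have "E a b = E b a" if "a < n" "b < n" for a b
    using simple that by (simp add: simple_graph_def)
  ultimately show "A $$ (i, j) = cnj (A $$ (j, i))"
    using kron_one_mat_carrier[OF Adj_carrier, of k] block_index_less[of a n r k] block_index_less[of b n s k]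
    by (auto simp: kron_one_mat_index[OF Adj_carrier] adj_mat_dim)
qed

lemma vec_slice_eigenvector:
  assumes v: "v \<in> carrier_vec (n * k)" and Av: "A *\<^sub>v v = \<mu> \<cdot>\<^sub>v v" and r: "r < k"
  shows "Adj *\<^sub>v vec_slice k v r = (\<mu> * complex_of_real lam1) \<cdot>\<^sub>v vec_slice k v r"
proof (rule eq_vecI)
  fix a assume "a < dim_vec ((\<mu> * complex_of_real lam1) \<cdot>\<^sub>v vec_slice k v r)"
  then have a: "a < n"
    using v k_pos by (simp add: vec_slice_def)
  have "complex_of_real (1 / lam1) * (Adj *\<^sub>v vec_slice k v r) $ a = \<mu> * v $ (a * k + r)"
    using A_mult_vec_index[OF v a r] arg_cong[OF Av, of "\<lambda>x. x $ (a * k + r)"] v block_index_less[OF a r]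
    by simp
  then show "(Adj *\<^sub>v vec_slice k v r) $ a = ((\<mu> * complex_of_real lam1) \<cdot>\<^sub>v vec_slice k v r) $ a"
    using lam1_pos a v k_pos by (simp add: vec_slice_def field_simps)
qed (use v k_pos in \<open>simp add: vec_slice_def adj_mat_dim\<close>)

lemma spectrum_A_bound:
  assumes \<mu>: "\<mu> \<in> spectrum A" "\<mu> \<noteq> 1"
  shows "cmod \<mu> \<le> Max (cmod ` (spectrum Adj - {complex_of_real lam1})) / lam1"
proof -
  obtain v where v: "v \<in> carrier_vec (n * k)" "v \<noteq> 0\<^sub>v (n * k)" "A *\<^sub>v v = \<mu> \<cdot>\<^sub>v v"
    using \<mu>(1) A_carrier by (auto simp: spectrum_def eigenvalue_def eigenvector_def)
  obtain i where i: "i < n * k" "v $ i \<noteq> 0"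
    using v(1,2) by (metis eq_vecI carrier_vecD index_zero_vec)
  then obtain a r where a: "a < n" and r: "r < k" and "i = a * k + r"
    using block_index_cases by metis
  then have "vec_slice k v r \<noteq> 0\<^sub>v n"
    using i v(1) by (auto simp: vec_slice_def dest!: arg_cong[of _ _ "\<lambda>x. x $ a"])
  then have "\<mu> * complex_of_real lam1 \<in> spectrum Adj"
    using vec_slice_eigenvector[OF v(1,3) r] vec_slice_carrier[OF v(1) k_pos]
    by (auto simp: spectrum_def eigenvalue_def eigenvector_def adj_mat_dim)
  moreover have "\<mu> * complex_of_real lam1 \<noteq> complex_of_real lam1"
    using \<mu>(2) lam1_pos by simp
  ultimately have "cmod (\<mu> * complex_of_real lam1) \<in> cmod ` (spectrum Adj - {complex_of_real lam1})"
    by blast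
  moreover have "finite (cmod ` (spectrum Adj - {complex_of_real lam1}))"
    using card_finite_spectrum(1)[OF Adj_carrier] by simp
  ultimately have "cmod \<mu> * lam1 \<le> Max (cmod ` (spectrum Adj - {complex_of_real lam1}))"
    using Max_ge lam1_pos by (fastforce simp: norm_mult)
  then show ?thesis
    using lam1_pos by (simp add: pos_le_divide_eq)
qed

lemma A_mult_tensor:
  assumes w: "w \<in> carrier_vec k"
  shows "A *\<^sub>v vec_tensor XC w = vec_tensor XC w"
proof (rule eq_vec_blocksI[where n = n and k = k])
  show "A *\<^sub>v vec_tensor XC w \<in> carrier_vec (n * k)" "vec_tensor XC w \<in> carrier_vec (n * k)"
    using A_carrier vec_tensor_carrier[OF XC_carrier w] by auto
  fix a r assume a: "a < n" and r: "r < k"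
  have "vec_slice k (vec_tensor XC w) r = w $ r \<cdot>\<^sub>v XC"
    using r k_pos carrier_vecD[OF w] carrier_vecD[OF X_carrier]
    by (intro eq_vecI) (auto simp: vec_tensor_index mult.commute)
  then have "Adj *\<^sub>v vec_slice k (vec_tensor XC w) r = (w $ r * complex_of_real lam1) \<cdot>\<^sub>v XC"
    using mult_mat_vec[OF Adj_carrier XC_carrier] by (simp add: Adj_mult_XC smult_smult_assoc mult_ac)
  then show "(A *\<^sub>v vec_tensor XC w) $ (a * k + r) = vec_tensor XC w $ (a * k + r)"
    using A_mult_vec_index[OF vec_tensor_carrier[OF XC_carrier w] a r] lam1_pos a r w X_carrier
    by (simp add: vec_tensor_index)
qed

lemma fixed_space_tensor:
  assumes v: "v \<in> fixed_space (n * k) A"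
  shows "\<exists>w\<in>carrier_vec k. v = vec_tensor XC w"
proof -
  have "\<exists>c. \<forall>a<n. vec_slice k v r $ a = c * complex_of_real (X $ a)" if r: "r < k" for r
  proof (rule perron_eigenvector_unique[OF connected X_carrier X_pos perron_eq])
    show "vec_slice k v r \<in> carrier_vec n"
      using v k_pos by (simp add: vec_slice_carrier)
    show "Adj *\<^sub>v vec_slice k v r = complex_of_real lam1 \<cdot>\<^sub>v vec_slice k v r"
      using vec_slice_eigenvector[of v 1 r] v r by simp
  qed
  then obtain c where c: "\<And>r a. r < k \<Longrightarrow> a < n \<Longrightarrow> vec_slice k v r $ a = c r * complex_of_real (X $ a)"
    by metis
  have "v = vec_tensor XC (vec k c)"
  proof (rule eq_vec_blocksI[where n = n and k = k])
    show "v \<in> carrier_vec (n * k)" "vec_tensor XC (vec k c) \<in> carrier_vec (n * k)"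
      using v vec_tensor_carrier[OF XC_carrier, of "vec k c" k] by auto
    fix a r assume "a < n" "r < k"
    moreover have "dim_vec v = n * k"
      using v by auto
    ultimately show "v $ (a * k + r) = vec_tensor XC (vec k c) $ (a * k + r)"
      using c[of r a] k_pos carrier_vecD[OF X_carrier] by (simp add: vec_tensor_index mult.commute)
  qed
  then show ?thesis
    by auto
qed


lemma U_mult_tensor_index:
  assumes w: "w \<in> carrier_vec k" and a: "a < n" and r: "r < k"
  shows "(U *\<^sub>v vec_tensor XC w) $ (a * k + r) = complex_of_real (X $ a) * (f a *\<^sub>v w) $ r"
proof -
  have "vec_block k (vec_tensor XC w) a = complex_of_real (X $ a) \<cdot>\<^sub>v w"
    using w a carrier_vecD[OF X_carrier] by (intro eq_vecI) (auto simp: vec_block_def vec_tensor_index)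
  then show ?thesis
    using U_mult_vec_index[OF vec_tensor_carrier[OF XC_carrier w] a r] mult_mat_vec[OF f_carrier[OF a] w] r
      f_carrier[OF a] by simp
qed

lemma proj_U_tensor:
  assumes w: "w \<in> carrier_vec k"
  defines "c \<equiv> vec k (\<lambda>i. \<Sum>a<n. complex_of_real ((X $ a)\<^sup>2) * (f a *\<^sub>v w) $ i)"
  shows "proj (fixed_space (n * k) A) (U *\<^sub>v vec_tensor XC w) = vec_tensor XC c"
proof (rule proj_eqI[where N = "n * k"])
  have c: "c \<in> carrier_vec k"
    by (simp add: c_def)
  show "fixed_space (n * k) A \<subseteq> carrier_vec (n * k)"
    by auto
  show "\<forall>a\<in>fixed_space (n * k) A. \<forall>b\<in>fixed_space (n * k) A. a - b \<in> fixed_space (n * k) A"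
    by (intro ballI fixed_space_diff[OF A_carrier])
  show "U *\<^sub>v vec_tensor XC w \<in> carrier_vec (n * k)"
    using U_carrier vec_tensor_carrier[OF XC_carrier w] by simp
  show "vec_tensor XC c \<in> fixed_space (n * k) A"
    using A_mult_tensor[OF c] vec_tensor_carrier[OF XC_carrier c] by simp
  show "\<forall>z\<in>fixed_space (n * k) A. cinner (U *\<^sub>v vec_tensor XC w - vec_tensor XC c) z = 0"
  proof
    fix z assume "z \<in> fixed_space (n * k) A"
    then obtain w' where w': "w' \<in> carrier_vec k" and z: "z = vec_tensor XC w'"
      using fixed_space_tensor by blast
    have Uv: "U *\<^sub>v vec_tensor XC w \<in> carrier_vec (n * k)"
      using U_carrier vec_tensor_carrier[OF XC_carrier w] by simp
    have "cinner (U *\<^sub>v vec_tensor XC w - vec_tensor XC c) z =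
        (\<Sum>a<n. \<Sum>r<k. (U *\<^sub>v vec_tensor XC w - vec_tensor XC c) $ (a * k + r) * cnj (z $ (a * k + r)))"
    proof -
      have "dim_vec (U *\<^sub>v vec_tensor XC w - vec_tensor XC c) = n * k"
        using carrier_vecD[OF X_carrier] carrier_vecD[OF c] by simp
      then show ?thesis
        unfolding cinner_def by (simp only: sum_lessThan_mult_blocks)
    qed
    also have "\<dots> = (\<Sum>a<n. \<Sum>r<k. complex_of_real ((X $ a)\<^sup>2) * ((f a *\<^sub>v w) $ r - c $ r) * cnj (w' $ r))"
    proof (intro sum.cong refl)
      fix a r assume "a \<in> {..<n}" "r \<in> {..<k}"
      then have a: "a < n" and r: "r < k" by auto
      have eq1: "(U *\<^sub>v vec_tensor XC w - vec_tensor XC c) $ (a * k + r) =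
          complex_of_real (X $ a) * (f a *\<^sub>v w) $ r - complex_of_real (X $ a) * c $ r"
        using Uv block_index_less[OF a r] U_mult_tensor_index[OF w a r] vec_tensor_index[OF c, of a XC r]
          carrier_vecD[OF X_carrier] carrier_vecD[OF c] a r by simp
      have eq2: "z $ (a * k + r) = complex_of_real (X $ a) * w' $ r"
        using z vec_tensor_index[OF w', of a XC r] carrier_vecD[OF X_carrier] a r by simp
      show "(U *\<^sub>v vec_tensor XC w - vec_tensor XC c) $ (a * k + r) * cnj (z $ (a * k + r)) =
          complex_of_real ((X $ a)\<^sup>2) * ((f a *\<^sub>v w) $ r - c $ r) * cnj (w' $ r)"
        unfolding eq1 eq2 by (simp add: power2_eq_square algebra_simps)
    qed
    also have "\<dots> = (\<Sum>r<k. ((\<Sum>a<n. complex_of_real ((X $ a)\<^sup>2) * (f a *\<^sub>v w) $ r)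
        - (\<Sum>a<n. complex_of_real ((X $ a)\<^sup>2)) * c $ r) * cnj (w' $ r))"
      by (subst sum.swap) (simp add: algebra_simps sum_subtractf sum_distrib_left sum_distrib_right)
    also have "\<dots> = 0"
    proof -
      have "(\<Sum>a<n. complex_of_real ((X $ a)\<^sup>2)) = 1"
        using arg_cong[OF X_unit, of complex_of_real] by simp
      then show ?thesis
        by (intro sum.neutral ballI) (simp add: c_def)
    qed
    finally show "cinner (U *\<^sub>v vec_tensor XC w - vec_tensor XC c) z = 0" .
  qed
qed


lemma min_weight_bounds:
  defines "q \<equiv> Min {(X $ m)\<^sup>2 | m. m < n}"
  shows "0 < q" and "\<And>a. a < n \<Longrightarrow> q \<le> (X $ a)\<^sup>2"
proof -
  have eq: "{(X $ m)\<^sup>2 | m. m < n} = (\<lambda>m. (X $ m)\<^sup>2) ` {..<n}"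
    by auto
  have "0 < n"
    using connected by (simp add: graph_connected_def)
  then have "q \<in> (\<lambda>m. (X $ m)\<^sup>2) ` {..<n}"
    unfolding q_def eq by (intro Min_in) auto
  then show "0 < q"
    using X_pos by auto
  show "\<And>a. a < n \<Longrightarrow> q \<le> (X $ a)\<^sup>2"
    unfolding q_def eq by (intro Min_le) auto
qed

lemma vnorm_proj_U_le:
  assumes \<kappa>: "0 \<le> \<kappa>"
    and sep: "\<And>w. w \<in> carrier_vec k \<Longrightarrow> w \<noteq> 0\<^sub>v k \<Longrightarrow> \<exists>a<n. \<exists>b<n. \<kappa> * vnorm w < vnorm (f b *\<^sub>v w - f a *\<^sub>v w)"
  shows "\<forall>v\<in>fixed_space (n * k) A.
    vnorm (proj (fixed_space (n * k) A) (U *\<^sub>v v)) \<le> (1 - Min {(X $ m)\<^sup>2 | m. m < n} * \<kappa>\<^sup>2 / 8) * vnorm v"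
proof
  fix v assume "v \<in> fixed_space (n * k) A"
  then obtain w where w: "w \<in> carrier_vec k" and v: "v = vec_tensor XC w"
    using fixed_space_tensor by blast
  define c where "c = vec k (\<lambda>i. \<Sum>a<n. complex_of_real ((X $ a)\<^sup>2) * (f a *\<^sub>v w) $ i)"
  have c: "c \<in> carrier_vec k"
    by (simp add: c_def)
  have "vnorm (proj (fixed_space (n * k) A) (U *\<^sub>v v)) = vnorm c" and "vnorm v = vnorm w"
    using proj_U_tensor[OF w] vnorm_vec_tensor[OF XC_carrier c] vnorm_vec_tensor[OF XC_carrier w] vnorm_XC
    by (simp_all add: v c_def)
  moreover have "vnorm c \<le> (1 - Min {(X $ m)\<^sup>2 | m. m < n} * \<kappa>\<^sup>2 / 8) * vnorm w"
  proof (cases "w = 0\<^sub>v k")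
    case True
    then have "c = 0\<^sub>v k"
      by (intro eq_vecI) (auto simp: c_def mult_mat_vec_zero[OF f_carrier] intro!: sum.neutral)
    then show ?thesis
      using True by simp
  next
    case False
    then obtain a b where ab: "a < n" "b < n" and sep_ab: "\<kappa> * vnorm w < vnorm (f b *\<^sub>v w - f a *\<^sub>v w)"
      using sep[OF w] by blast
    have "a \<noteq> b"
    proof
      assume "a = b"
      then have "f b *\<^sub>v w - f a *\<^sub>v w = 0\<^sub>v k"
        using mult_mat_vec_carrier[OF f_carrier[OF ab(1)] w] by simp
      then show False
        using sep_ab mult_nonneg_nonneg[OF \<kappa> vnorm_nonneg[of w]] by simp
    qed
    show ?thesis
      unfolding c_def of_real_power[symmetric]
    proof (rule vnorm_weighted_mean_le[OF _ _ _ _ _ ab \<open>a \<noteq> b\<close> less_imp_le[OF sep_ab] \<kappa>])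
      show "f a *\<^sub>v w \<in> carrier_vec k" "vnorm (f a *\<^sub>v w) = vnorm w" if "a < n" for a
        using f_carrier[OF that] unitary_vnorm[OF f_unitary[OF that] w] w by auto
      show "(\<Sum>a<n. (X $ a)\<^sup>2) = 1"
        by (rule X_unit)
      show "Min {(X $ m)\<^sup>2 | m. m < n} \<le> (X $ a)\<^sup>2" if "a < n" for a
        using min_weight_bounds(2)[OF that] .
      show "0 \<le> Min {(X $ m)\<^sup>2 | m. m < n}"
        using min_weight_bounds(1) by simp
    qed
  qed
  ultimately show "vnorm (proj (fixed_space (n * k) A) (U *\<^sub>v v)) \<le>
      (1 - Min {(X $ m)\<^sup>2 | m. m < n} * \<kappa>\<^sup>2 / 8) * vnorm v"
    by simp
qed


lemma vnorm_UA_le: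
  assumes lam: "Max (cmod ` (spectrum Adj - {complex_of_real lam1})) / lam1 < 1"
    and x: "x \<in> carrier_vec (n * k)"
  shows "vnorm ((U * A) *\<^sub>v x) \<le> vnorm x"
proof -
  have "vnorm ((U * A) *\<^sub>v x) = vnorm (A *\<^sub>v x)"
    using unitary_vnorm[OF U_unitary] A_carrier U_carrier x by (simp add: assoc_mult_mat_vec)
  also have "\<dots> \<le> vnorm x"
    using vnorm_hermitian_le[OF A_hermitian _ x] spectrum_A_bound lam by force
  finally show ?thesis .
qed

lemma opnorm_power_le:
  assumes lam: "Max (cmod ` (spectrum Adj - {complex_of_real lam1})) / lam1 < 1" and \<kappa>: "0 \<le> \<kappa>"
    and sep: "\<And>w. w \<in> carrier_vec k \<Longrightarrow> w \<noteq> 0\<^sub>v k \<Longrightarrow> \<exists>a<n. \<exists>b<n. \<kappa> * vnorm w < vnorm (f b *\<^sub>v w - f a *\<^sub>v w)"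
  shows "opnorm ((U * A) ^\<^sub>m j) \<le>
    shrinkage_factor (Max (cmod ` (spectrum Adj - {complex_of_real lam1})) / lam1)
      (1 - Min {(X $ m)\<^sup>2 | m. m < n} * \<kappa>\<^sup>2 / 8) ^ (j div 2)"
proof -
  define l where "l = Max (cmod ` (spectrum Adj - {complex_of_real lam1})) / lam1"
  define d where "d = 1 - Min {(X $ m)\<^sup>2 | m. m < n} * \<kappa>\<^sup>2 / 8"
  have spec: "\<forall>\<nu>\<in>spectrum A. \<nu> \<noteq> 1 \<longrightarrow> cmod \<nu> \<le> l"
    using spectrum_A_bound by (simp add: l_def)
  have UA: "U * A \<in> carrier_mat (n * k) (n * k)"
    using U_carrier A_carrier by simp
  note step = vnorm_UA_le[OF lam]
  have double_step: "vnorm ((U * A) ^\<^sub>m 2 *\<^sub>v x) \<le> shrinkage_factor l d * vnorm x"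
    if x: "x \<in> carrier_vec (n * k)" for x
  proof (cases "0 \<le> l \<and> 0 \<le> d \<and> d < 1")
    case True
    then show ?thesis
      using vnorm_square_shrinkage[OF A_hermitian U_unitary _ _ _ _ spec vnorm_proj_U_le[OF \<kappa> sep] x] lam
      by (simp add: l_def d_def)
  next
    case False
    then have "shrinkage_factor l d = 1"
      by (auto simp: shrinkage_factor_def)
    moreover have "(U * A) ^\<^sub>m 2 *\<^sub>v x = (U * A) *\<^sub>v ((U * A) *\<^sub>v x)"
      using assoc_mult_mat_vec[OF UA UA x] UA by (simp add: numeral_2_eq_2)
    ultimately show ?thesis
      using step[OF x] step[of "(U * A) *\<^sub>v x"] UA x by simp
  qed
  have "opnorm ((U * A) ^\<^sub>m j) \<le> shrinkage_factor l d ^ (j div 2)"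
  proof (rule opnorm_le)
    show "(U * A) ^\<^sub>m j \<in> carrier_mat (n * k) (n * k)"
      using UA by (rule pow_carrier_mat)
    show "0 \<le> shrinkage_factor l d ^ (j div 2)"
      using shrinkage_factor_bounds(1) by simp
  qed (rule vnorm_mat_pow_le[OF UA shrinkage_factor_bounds(1) step double_step])
  then show ?thesis
    by (simp add: l_def d_def)
qed

end

lemma unitary_rep_displacement:
  assumes G: "group \<Gamma>" and \<rho>: "unitary_rep \<Gamma> k \<rho>"
    and a: "a \<in> carrier \<Gamma>" and b: "b \<in> carrier \<Gamma>" and u: "u \<in> carrier_vec k"
  shows "vnorm (\<rho> (inv\<^bsub>\<Gamma>\<^esub> a \<otimes>\<^bsub>\<Gamma>\<^esub> b) *\<^sub>v u - u) = vnorm (\<rho> b *\<^sub>v u - \<rho> a *\<^sub>v u)"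
proof -
  let ?s = "inv\<^bsub>\<Gamma>\<^esub> a \<otimes>\<^bsub>\<Gamma>\<^esub> b"
  have s: "?s \<in> carrier \<Gamma>"
    using G a b by (simp add: group.inv_closed group.is_monoid monoid.m_closed)
  have Ua: "unitary_mat k (\<rho> a)" and Ca: "\<rho> a \<in> carrier_mat k k" and Cs: "\<rho> ?s \<in> carrier_mat k k"
    using \<rho> a s unfolding unitary_rep_def by (auto simp: unitary_mat_carrier)
  have "\<rho> a * \<rho> ?s = \<rho> (a \<otimes>\<^bsub>\<Gamma>\<^esub> ?s)"
    using \<rho> a s unfolding unitary_rep_def by simp
  also have "a \<otimes>\<^bsub>\<Gamma>\<^esub> ?s = b"
    using group.inv_solve_left[OF G s a b] by simp
  finally have as: "\<rho> a * \<rho> ?s = \<rho> b" .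
  have "vnorm (\<rho> ?s *\<^sub>v u - u) = vnorm (\<rho> a *\<^sub>v (\<rho> ?s *\<^sub>v u - u))"
    using unitary_vnorm[OF Ua, of "\<rho> ?s *\<^sub>v u - u"] Cs u by simp
  also have "\<rho> a *\<^sub>v (\<rho> ?s *\<^sub>v u - u) = \<rho> b *\<^sub>v u - \<rho> a *\<^sub>v u"
    using mult_minus_distrib_mat_vec[OF Ca _ u, of "\<rho> ?s *\<^sub>v u"] assoc_mult_mat_vec[OF Ca Cs u] as Cs u
    by simp
  finally show ?thesis .
qed

lemma vnorm_diff_mult_mat_vec_smult:
  assumes B: "B \<in> carrier_mat m n" and C: "C \<in> carrier_mat m n" and u: "u \<in> carrier_vec n"
  shows "vnorm (B *\<^sub>v (c \<cdot>\<^sub>v u) - C *\<^sub>v (c \<cdot>\<^sub>v u)) = cmod c * vnorm (B *\<^sub>v u - C *\<^sub>v u)"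
proof -
  have "B *\<^sub>v (c \<cdot>\<^sub>v u) - C *\<^sub>v (c \<cdot>\<^sub>v u) = c \<cdot>\<^sub>v (B *\<^sub>v u - C *\<^sub>v u)"
    using B C u by (intro eq_vecI) (auto simp: mult_mat_vec algebra_simps)
  then show ?thesis
    by (simp add: vnorm_smult)
qed

theorem twisted_walk_power_bound:
  fixes \<Gamma> :: "('g, 'b) monoid_scheme" and t :: "nat \<Rightarrow> 'g" and \<rho> :: "'g \<Rightarrow> complex mat"
  assumes graph: "simple_graph n E" "graph_connected n E"
    and perron: "0 < lam1" "eigenvector (adj_mat n E) X lam1" "\<forall>m<n. 0 < X $ m" "(\<Sum>m<n. (X $ m)\<^sup>2) = 1"
    and gap: "Max (cmod ` (spectrum (map_mat complex_of_real (adj_mat n E)) - {complex_of_real lam1})) / lam1 < 1"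
    and G: "group \<Gamma>" "\<forall>m<n. t m \<in> carrier \<Gamma>" and \<rho>: "unitary_rep \<Gamma> k \<rho>" "0 < k" and \<kappa>: "0 < \<kappa>"
    and sep: "\<forall>u\<in>carrier_vec k. vnorm u = 1 \<longrightarrow>
      (\<exists>s\<in>{inv\<^bsub>\<Gamma>\<^esub> (t a) \<otimes>\<^bsub>\<Gamma>\<^esub> t b | a b. a < n \<and> b < n}. vnorm (\<rho> s *\<^sub>v u - u) > \<kappa>)"
  shows "opnorm ((diag_block_mat (map (\<lambda>m. \<rho> (t m)) [0..<n]) *
      (complex_of_real (1 / lam1) \<cdot>\<^sub>m kron (map_mat complex_of_real (adj_mat n E)) (1\<^sub>m k))) ^\<^sub>m j)
    \<le> shrinkage_factor (Max (cmod ` (spectrum (map_mat complex_of_real (adj_mat n E)) - {complex_of_real lam1})) / lam1)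
        (1 - Min {(X $ m)\<^sup>2 | m. m < n} * \<kappa>\<^sup>2 / 8) ^ (j div 2)"
proof -
  have \<rho>_unitary: "\<And>m. m < n \<Longrightarrow> unitary_mat k (\<rho> (t m))"
    using \<rho>(1) G(2) by (simp add: unitary_rep_def)
  interpret twisted_walk n E lam1 X k "\<lambda>m. \<rho> (t m)"
    using graph perron \<rho>(2) \<rho>_unitary by unfold_locales auto
  have "\<exists>a<n. \<exists>b<n. \<kappa> * vnorm w < vnorm (\<rho> (t b) *\<^sub>v w - \<rho> (t a) *\<^sub>v w)"
    if w: "w \<in> carrier_vec k" "w \<noteq> 0\<^sub>v k" for w
  proof -
    define u where "u = complex_of_real (1 / vnorm w) \<cdot>\<^sub>v w"
    have u: "u \<in> carrier_vec k" "vnorm u = 1" and wu: "w = complex_of_real (vnorm w) \<cdot>\<^sub>v u"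
      using w vnorm_normalize[OF w] vnorm_pos_iff[OF w(1)] by (auto simp: u_def smult_smult_assoc)
    obtain a b where ab: "a < n" "b < n" and "\<kappa> < vnorm (\<rho> (inv\<^bsub>\<Gamma>\<^esub> (t a) \<otimes>\<^bsub>\<Gamma>\<^esub> t b) *\<^sub>v u - u)"
      using sep u by blast
    then have "\<kappa> < vnorm (\<rho> (t b) *\<^sub>v u - \<rho> (t a) *\<^sub>v u)"
      using unitary_rep_displacement[OF G(1) \<rho>(1) _ _ u(1)] G(2) by simp
    then have "\<kappa> * vnorm w < vnorm w * vnorm (\<rho> (t b) *\<^sub>v u - \<rho> (t a) *\<^sub>v u)"
      using vnorm_pos_iff[OF w(1)] w(2) by (simp add: mult.commute)
    also have "\<dots> = vnorm (\<rho> (t b) *\<^sub>v w - \<rho> (t a) *\<^sub>v w)"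
      using vnorm_diff_mult_mat_vec_smult[OF f_carrier[OF ab(2)] f_carrier[OF ab(1)] u(1),
          of "complex_of_real (vnorm w)", folded wu] by simp
    finally show ?thesis
      using ab by blast
  qed
  then show ?thesis
    using opnorm_power_le[OF gap less_imp_le[OF \<kappa>]] by simp
qed

theorem mainTheorem11:
  "\<exists>g :: real \<Rightarrow> real \<Rightarrow> real.
     (\<forall>l d. 0 \<le> l \<and> l < 1 \<and> 0 \<le> d \<and> d < 1 \<longrightarrow> g l d < 1) \<and>
     shrinkage_const g \<and>
     (\<forall>(n::nat) E (lam1::real) (X::real vec) (\<Gamma>::('g, 'b) monoid_scheme) (t::nat \<Rightarrow> 'g) (\<kappa>::real).
        simple_graph n E \<and> graph_connected n E \<and>
        lam1 = spectral_radius (map_mat complex_of_real (adj_mat n E)) \<and> 0 < lam1 \<and>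
        eigenvector (adj_mat n E) X lam1 \<and> (\<forall>m<n. 0 < X $ m) \<and> (\<Sum>m<n. (X $ m)\<^sup>2) = 1 \<and>
        Max (cmod ` (spectrum (map_mat complex_of_real (adj_mat n E)) - {complex_of_real lam1})) / lam1 < 1 \<and>
        group \<Gamma> \<and> (\<forall>m<n. t m \<in> carrier \<Gamma>) \<and>
        generate \<Gamma> {inv\<^bsub>\<Gamma>\<^esub> (t a) \<otimes>\<^bsub>\<Gamma>\<^esub> t b | a b. a < n \<and> b < n} = carrier \<Gamma> \<and>
        0 < \<kappa> \<and>
        (\<forall>k (\<rho>::'g \<Rightarrow> complex mat).
           irreducible_rep \<Gamma> k \<rho> \<and> nontrivial_rep \<Gamma> k \<rho> \<and> finite (\<rho> ` carrier \<Gamma>) \<longrightarrow>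
           (\<forall>u\<in>carrier_vec k. vnorm u = 1 \<longrightarrow>
              (\<exists>s\<in>{inv\<^bsub>\<Gamma>\<^esub> (t a) \<otimes>\<^bsub>\<Gamma>\<^esub> t b | a b. a < n \<and> b < n}. vnorm (\<rho> s *\<^sub>v u - u) > \<kappa>)))
      \<longrightarrow>
        (\<forall>k (\<rho>::'g \<Rightarrow> complex mat).
           irreducible_rep \<Gamma> k \<rho> \<and> nontrivial_rep \<Gamma> k \<rho> \<and> finite (\<rho> ` carrier \<Gamma>) \<longrightarrow>
           (let U = diag_block_mat (map (\<lambda>m. \<rho> (t m)) [0..<n]);
                A = (complex_of_real (1 / lam1)) \<cdot>\<^sub>m kron (map_mat complex_of_real (adj_mat n E)) (1\<^sub>m k);
                lam = Max (cmod ` (spectrum (map_mat complex_of_real (adj_mat n E)) - {complex_of_real lam1})) / lam1;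
                d = 1 - Min {(X $ m)\<^sup>2 | m. m < n} * \<kappa>\<^sup>2 / 8
            in \<forall>j::nat. opnorm ((U * A) ^\<^sub>m j) \<le> g lam d ^ (j div 2))))"
proof (intro exI[of _ shrinkage_factor] conjI allI impI, goal_cases)
  case (1 l d)
  then show ?case
    by (simp add: shrinkage_factor_bounds(3))
next
  case 2
  show ?case
    by (rule shrinkage_const_shrinkage_factor)
next
  case (3 n E lam1 X \<Gamma> t \<kappa> k \<rho>)
  from 3(2) have "unitary_rep \<Gamma> k \<rho>" "0 < k"
    unfolding irreducible_rep_def by blast+
  with 3 show ?case
    unfolding Let_def
    by (elim conjE, intro allI twisted_walk_power_bound[where \<Gamma> = \<Gamma> and t = t and \<rho> = \<rho>])
      (assumption | blast)+
qed

end
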